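(* Let $n=2^bc$ with $c>1$ odd and $b>1$. Let $D_n=\langle s_1,t_1\mid s_1^2=t_1^{n/2}=1,\ s_1t_1s_1=t_1^{-1}\rangle$ and $D_{2n}=\langle s_2,t_2\mid s_2^2=t_2^n=1,\ s_2t_2s_2=t_2^{-1}\rangle$. Let $(u_i)_{i\in[1,m]}$ be a system of equations over $D_n$, each $u_i$ a word over constants $s_1,t_1,t_1^{-1}$ and variables $X_1^{\pm1},\dots,X_k^{\pm1}$. Let $w_i$ be obtained from $u_i$ by replacing $s_1\mapsto a$, $t_1^{\pm1}\mapsto d^{\pm2}$, each $X_j$ by $g_{0,j}(g_{1,j}dg_{1,j}^{-1})\cdots(g_{n/2,j}dg_{n/2,j}^{-1})$ and each $X_j^{-1}$ by the formal inverse of that word. Let $G_{4c}$ be the group with generators $a,d$ and $g_{i,j}$ ($i\in[0,n/2]$, $j\in[1,k]$) and relators $a^2$, $d^n$, $adad$, $[g,g']$, $[g,a]$, $g^2$, $[[\cdots[[d^c,g],g],\cdots],g]$ (with $b$ occurrences of $g$) for all $g,g'\in\{g_{i,j}\}$, and $w_i$ for $i\in[1,m]$. Then there is a surjective homomorphism $G_{4c}\to D_{2n}$ if and only if the system $(u_i)_{i\in[1,m]}$ has a solution in $D_n$.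
   Context: A solution of a system of equations over a group is an assignment of group elements $h_j$ to the variables $X_j$ (and $h_j^{-1}$ to $X_j^{-1}$) under which every equation evaluates to the identity. $[x,y]=xyx^{-1}y^{-1}$. *)

theory Defs
  imports "HOL-Algebra.Group"
begin

text \<open>A letter is a pair (x, e): e = False means the generator x, e = True means its inverse.\<close>
type_synonym 'a word = "('a \<times> bool) list"

definition winv :: "'a word \<Rightarrow> 'a word" where
  "winv w = rev (map (\<lambda>(x, e). (x, \<not> e)) w)"

definition wcomm :: "'a word \<Rightarrow> 'a word \<Rightarrow> 'a word" where
  "wcomm x y = x @ y @ winv x @ winv y"

fun itcomm :: "'a word \<Rightarrow> 'a word \<Rightarrow> nat \<Rightarrow> 'a word" where
  "itcomm w g 0 = w"
| "itcomm w g (Suc l) = wcomm (itcomm w g l) g"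

definition words :: "'a set \<Rightarrow> 'a word set" where
  "words X = lists (X \<times> UNIV)"

inductive pres_eq :: "'a set \<Rightarrow> 'a word set \<Rightarrow> 'a word \<Rightarrow> 'a word \<Rightarrow> bool"
  for X :: "'a set" and R :: "'a word set" where
  refl: "w \<in> words X \<Longrightarrow> pres_eq X R w w"
| sym: "pres_eq X R u v \<Longrightarrow> pres_eq X R v u"
| trans: "pres_eq X R u v \<Longrightarrow> pres_eq X R v w \<Longrightarrow> pres_eq X R u w"
| cancel: "u \<in> words X \<Longrightarrow> v \<in> words X \<Longrightarrow> x \<in> X \<Longrightarrow>
           pres_eq X R (u @ [(x, e), (x, \<not> e)] @ v) (u @ v)"
| relator: "u \<in> words X \<Longrightarrow> v \<in> words X \<Longrightarrow> r \<in> R \<Longrightarrow> r \<in> words X \<Longrightarrow>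
           pres_eq X R (u @ r @ v) (u @ v)"

definition wclass :: "'a set \<Rightarrow> 'a word set \<Rightarrow> 'a word \<Rightarrow> 'a word set" where
  "wclass X R w = {v. pres_eq X R w v}"

definition presented_group :: "'a set \<Rightarrow> 'a word set \<Rightarrow> 'a word set monoid" where
  "presented_group X R =
     \<lparr> carrier = wclass X R ` words X,
       mult = (\<lambda>A B. \<Union>u\<in>A. \<Union>v\<in>B. wclass X R (u @ v)),
       one = wclass X R [] \<rparr>"

datatype dgen = Sg | Tg

definition dihedral_pres :: "nat \<Rightarrow> dgen word set monoid" where
  "dihedral_pres N = presented_group {Sg, Tg}
     {[(Sg, False), (Sg, False)], replicate N (Tg, False),
      [(Sg, False), (Tg, False), (Sg, False), (Tg, False)]}"

definition dS :: "nat \<Rightarrow> dgen word set" where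
  "dS N = wclass {Sg, Tg} {[(Sg, False), (Sg, False)], replicate N (Tg, False),
      [(Sg, False), (Tg, False), (Sg, False), (Tg, False)]} [(Sg, False)]"

definition dT :: "nat \<Rightarrow> dgen word set" where
  "dT N = wclass {Sg, Tg} {[(Sg, False), (Sg, False)], replicate N (Tg, False),
      [(Sg, False), (Tg, False), (Sg, False), (Tg, False)]} [(Tg, False)]"

text \<open>Letters of an equation: constants s1, t1, t1^-1 and variables X_j, X_j^-1.\<close>
datatype ulet = CS | CT | CTi | XV nat | XVi nat

definition ulet_vars :: "ulet \<Rightarrow> nat set" where
  "ulet_vars l = (case l of XV j \<Rightarrow> {j} | XVi j \<Rightarrow> {j} | _ \<Rightarrow> {})"

definition eval_ulet :: "('g, 'b) monoid_scheme \<Rightarrow> 'g \<Rightarrow> 'g \<Rightarrow> (nat \<Rightarrow> 'g) \<Rightarrow> ulet \<Rightarrow> 'g" where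
  "eval_ulet G s t h l = (case l of CS \<Rightarrow> s | CT \<Rightarrow> t | CTi \<Rightarrow> inv\<^bsub>G\<^esub> t
      | XV j \<Rightarrow> h j | XVi j \<Rightarrow> inv\<^bsub>G\<^esub> (h j))"

definition eval_eq :: "('g, 'b) monoid_scheme \<Rightarrow> 'g \<Rightarrow> 'g \<Rightarrow> (nat \<Rightarrow> 'g) \<Rightarrow> ulet list \<Rightarrow> 'g" where
  "eval_eq G s t h u = foldr (\<lambda>l acc. eval_ulet G s t h l \<otimes>\<^bsub>G\<^esub> acc) u \<one>\<^bsub>G\<^esub>"

definition has_solution_Dn :: "nat \<Rightarrow> nat \<Rightarrow> ulet list list \<Rightarrow> bool" where
  "has_solution_Dn n k us =
     (\<exists>h. (\<forall>j\<in>{1..k}. h j \<in> carrier (dihedral_pres (n div 2))) \<and>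
          (\<forall>u\<in>set us. eval_eq (dihedral_pres (n div 2)) (dS (n div 2)) (dT (n div 2)) h u
                        = \<one>\<^bsub>dihedral_pres (n div 2)\<^esub>))"

datatype ggen = GA | GD | GG nat nat

definition gletter :: "ggen \<Rightarrow> ggen word" where
  "gletter x = [(x, False)]"

definition Xword :: "nat \<Rightarrow> nat \<Rightarrow> ggen word" where
  "Xword n j = gletter (GG 0 j) @
     concat (map (\<lambda>i. gletter (GG i j) @ gletter GD @ winv (gletter (GG i j))) [1..<n div 2 + 1])"

definition subst_let :: "nat \<Rightarrow> ulet \<Rightarrow> ggen word" where
  "subst_let n l = (case l of CS \<Rightarrow> gletter GA
      | CT \<Rightarrow> gletter GD @ gletter GD
      | CTi \<Rightarrow> winv (gletter GD @ gletter GD)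
      | XV j \<Rightarrow> Xword n j
      | XVi j \<Rightarrow> winv (Xword n j))"

definition subst_eq :: "nat \<Rightarrow> ulet list \<Rightarrow> ggen word" where
  "subst_eq n u = concat (map (subst_let n) u)"

definition Ggens :: "nat \<Rightarrow> nat \<Rightarrow> ggen set" where
  "Ggens n k = {GG i j | i j. i \<le> n div 2 \<and> j \<in> {1..k}}"

definition G4c_gens :: "nat \<Rightarrow> nat \<Rightarrow> ggen set" where
  "G4c_gens n k = {GA, GD} \<union> Ggens n k"

definition G4c_rels :: "nat \<Rightarrow> nat \<Rightarrow> nat \<Rightarrow> nat \<Rightarrow> ulet list list \<Rightarrow> ggen word set" where
  "G4c_rels n b c k us =
     {gletter GA @ gletter GA, replicate n (GD, False),
      gletter GA @ gletter GD @ gletter GA @ gletter GD}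
   \<union> {wcomm (gletter g) (gletter g') | g g'. g \<in> Ggens n k \<and> g' \<in> Ggens n k}
   \<union> {wcomm (gletter g) (gletter GA) | g. g \<in> Ggens n k}
   \<union> {gletter g @ gletter g | g. g \<in> Ggens n k}
   \<union> {itcomm (replicate c (GD, False)) (gletter g) b | g. g \<in> Ggens n k}
   \<union> subst_eq n ` set us"

definition G4c :: "nat \<Rightarrow> nat \<Rightarrow> nat \<Rightarrow> nat \<Rightarrow> ulet list list \<Rightarrow> ggen word set monoid" where
  "G4c n b c k us = presented_group (G4c_gens n k) (G4c_rels n b c k us)"

end

(* A surjection G_4c -> D_2n amounts to values of a, d and the g_ij in D_2n that satisfy the
   relators and generate D_2n; dihedral groups are handled as pairs (e, i) standing for s^e t^i.

   Given such values, reduce modulo t^c: in the dihedral group of order 2c (c odd) the relators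
   force a to be a reflection and d a rotation t^delta with delta prime to c.  Back in D_2n, the
   g_ij are involutions commuting with a = s t^alpha, so they lie in the index-two subgroup
   {s^e t^i | i = e alpha mod 2}; as the values generate, delta is odd and hence prime to n.
   Then s -> a, t -> d^2 embeds D_n onto that subgroup, which contains the value of every X_j
   (its n/2 factors g d g^-1 are d or d^-1), and the relators w_i pull back to a solution in D_n.

   Conversely, for a solution X_j = s^e t^m take a = s, d = t, g_0j = s^e and g_ij in {1, s}
   with exactly p = (m + n/4) mod (n/2) of them trivial, so that X_j -> s^e t^(2p - n/2) =
   s^e t^(2m); the iterated commutators [[d^c, g], ..., g] become d^(2^b c) = 1. *)

theory Submission
  imports Defs "HOL-Algebra.Generated_Groups"
begin

section \<open>Words and presented groups\<close>

lemma words_Nil [simp]: "[] \<in> words X"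
  by (simp add: words_def)

lemma words_Cons [simp]: "(x, e) # w \<in> words X \<longleftrightarrow> x \<in> X \<and> w \<in> words X"
  by (auto simp: words_def)

lemma words_append [simp]: "u @ v \<in> words X \<longleftrightarrow> u \<in> words X \<and> v \<in> words X"
  by (auto simp: words_def)

lemma words_UNIV [simp]: "w \<in> words UNIV"
  by (simp add: words_def)

lemma words_replicate [simp]: "x \<in> X \<Longrightarrow> replicate m (x, e) \<in> words X"
  by (induction m) auto

lemma words_concat: "(\<And>w. w \<in> set ws \<Longrightarrow> w \<in> words X) \<Longrightarrow> concat ws \<in> words X"
  by (induction ws) auto

lemma winv_Nil [simp]: "winv [] = []"
  by (simp add: winv_def)

lemma winv_Cons [simp]: "winv ((x, e) # w) = winv w @ [(x, \<not> e)]"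
  by (simp add: winv_def)

lemma winv_append [simp]: "winv (u @ v) = winv v @ winv u"
  by (simp add: winv_def)

lemma winv_winv [simp]: "winv (winv w) = w"
  by (induction w) auto

lemma winv_words [simp]: "winv w \<in> words X \<longleftrightarrow> w \<in> words X"
proof -
  have "w \<in> words X \<Longrightarrow> winv w \<in> words X" for w
    by (induction w) auto
  then show ?thesis
    by (metis winv_winv)
qed

lemma pres_eq_words: "pres_eq X R u v \<Longrightarrow> u \<in> words X \<and> v \<in> words X"
  by (induction rule: pres_eq.induct) auto

lemma pres_eq_append_cong:
  "pres_eq X R u v \<Longrightarrow> x \<in> words X \<Longrightarrow> y \<in> words X \<Longrightarrow> pres_eq X R (x @ u @ y) (x @ v @ y)"
proof (induction rule: pres_eq.induct)
  case (refl w)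
  then show ?case by (auto intro: pres_eq.refl)
next
  case (sym u v)
  then show ?case by (auto intro: pres_eq.sym)
next
  case (trans u v w)
  then show ?case by (meson pres_eq.trans)
next
  case (cancel u v a e)
  then have "pres_eq X R ((x @ u) @ [(a, e), (a, \<not> e)] @ (v @ y)) ((x @ u) @ (v @ y))"
    by (intro pres_eq.cancel) auto
  then show ?case by simp
next
  case (relator u v r)
  then have "pres_eq X R ((x @ u) @ r @ (v @ y)) ((x @ u) @ (v @ y))"
    by (intro pres_eq.relator) auto
  then show ?case by simp
qed

lemma pres_eq_append:
  assumes "pres_eq X R u u'" and "pres_eq X R v v'"
  shows "pres_eq X R (u @ v) (u' @ v')"
proof -
  have "pres_eq X R ([] @ u @ v) ([] @ u' @ v)"
    using assms pres_eq_words by (intro pres_eq_append_cong) auto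
  moreover have "pres_eq X R (u' @ v @ []) (u' @ v' @ [])"
    using assms pres_eq_words by (intro pres_eq_append_cong) auto
  ultimately show ?thesis
    by (auto intro: pres_eq.trans)
qed

lemma pres_eq_append_winv: "w \<in> words X \<Longrightarrow> pres_eq X R (w @ winv w) []"
proof (induction w)
  case Nil
  then show ?case by (simp add: pres_eq.refl)
next
  case (Cons l w)
  obtain x e where l: "l = (x, e)"
    by force
  with Cons have x: "x \<in> X" "w \<in> words X"
    by auto
  have "pres_eq X R ([(x, e)] @ (w @ winv w) @ [(x, \<not> e)]) ([(x, e)] @ [] @ [(x, \<not> e)])"
    using Cons x by (intro pres_eq_append_cong) auto
  moreover have "pres_eq X R ([] @ [(x, e), (x, \<not> e)] @ []) ([] @ [])"
    using x by (intro pres_eq.cancel) auto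
  ultimately show ?case
    using l by (auto intro: pres_eq.trans)
qed

lemma pres_eq_winv_append: "w \<in> words X \<Longrightarrow> pres_eq X R (winv w @ w) []"
  using pres_eq_append_winv[of "winv w" X R] by simp

lemma wclass_self: "u \<in> words X \<Longrightarrow> u \<in> wclass X R u"
  by (simp add: wclass_def pres_eq.refl)

lemma wclass_eq_iff:
  assumes "u \<in> words X"
  shows "wclass X R u = wclass X R v \<longleftrightarrow> pres_eq X R u v"
proof
  assume "wclass X R u = wclass X R v"
  moreover have "u \<in> wclass X R u"
    using assms by (rule wclass_self)
  ultimately show "pres_eq X R u v"
    by (auto simp: wclass_def intro: pres_eq.sym)
next
  assume "pres_eq X R u v"
  then show "wclass X R u = wclass X R v"
    by (auto simp: wclass_def intro: pres_eq.sym pres_eq.trans)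
qed

lemma presented_group_carrier [simp]: "carrier (presented_group X R) = wclass X R ` words X"
  by (simp add: presented_group_def)

lemma presented_group_one: "\<one>\<^bsub>presented_group X R\<^esub> = wclass X R []"
  by (simp add: presented_group_def)

lemma presented_group_mult:
  assumes "u \<in> words X" and "v \<in> words X"
  shows "wclass X R u \<otimes>\<^bsub>presented_group X R\<^esub> wclass X R v = wclass X R (u @ v)"
proof -
  have "wclass X R (u' @ v') = wclass X R (u @ v)"
    if "u' \<in> wclass X R u" and "v' \<in> wclass X R v" for u' v'
  proof -
    have "pres_eq X R (u @ v) (u' @ v')"
      using that by (simp add: wclass_def pres_eq_append)
    then have "wclass X R (u @ v) = wclass X R (u' @ v')"
      using assms by (simp add: wclass_eq_iff)
    then show ?thesis
      by simp
  qed
  moreover have "u \<in> wclass X R u" "v \<in> wclass X R v"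
    using assms by (auto intro: wclass_self)
  ultimately have "(\<Union>u'\<in>wclass X R u. \<Union>v'\<in>wclass X R v. wclass X R (u' @ v')) = wclass X R (u @ v)"
    by blast
  then show ?thesis
    by (simp add: presented_group_def)
qed

lemma presented_group_relator:
  "r \<in> R \<Longrightarrow> r \<in> words X \<Longrightarrow> wclass X R r = \<one>\<^bsub>presented_group X R\<^esub>"
  using pres_eq.relator[of "[]" X "[]" r R] wclass_eq_iff[of r X R "[]"]
  by (simp add: presented_group_one)

lemma presented_group_winv_mult:
  "u \<in> words X \<Longrightarrow> wclass X R (winv u) \<otimes>\<^bsub>presented_group X R\<^esub> wclass X R u = \<one>\<^bsub>presented_group X R\<^esub>"
  using pres_eq_winv_append[of u X R] wclass_eq_iff[of "winv u @ u" X R "[]"]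
  by (simp add: presented_group_mult presented_group_one)

lemma group_presented_group: "group (presented_group X R)"
proof (rule groupI)
  show "\<one>\<^bsub>presented_group X R\<^esub> \<in> carrier (presented_group X R)"
    by (simp add: presented_group_one)
next
  fix x y
  assume "x \<in> carrier (presented_group X R)" "y \<in> carrier (presented_group X R)"
  then obtain u v where "u \<in> words X" "v \<in> words X" "x = wclass X R u" "y = wclass X R v"
    by auto
  then show "x \<otimes>\<^bsub>presented_group X R\<^esub> y \<in> carrier (presented_group X R)"
    by (simp add: presented_group_mult)
next
  fix x y z
  assume "x \<in> carrier (presented_group X R)" "y \<in> carrier (presented_group X R)"
    "z \<in> carrier (presented_group X R)"
  then obtain u v w where "u \<in> words X" "v \<in> words X" "w \<in> words X"
    "x = wclass X R u" "y = wclass X R v" "z = wclass X R w"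
    by auto
  then show "x \<otimes>\<^bsub>presented_group X R\<^esub> y \<otimes>\<^bsub>presented_group X R\<^esub> z =
      x \<otimes>\<^bsub>presented_group X R\<^esub> (y \<otimes>\<^bsub>presented_group X R\<^esub> z)"
    by (simp add: presented_group_mult)
next
  fix x
  assume "x \<in> carrier (presented_group X R)"
  then obtain u where "u \<in> words X" "x = wclass X R u"
    by auto
  then show "\<one>\<^bsub>presented_group X R\<^esub> \<otimes>\<^bsub>presented_group X R\<^esub> x = x"
    using presented_group_mult[of "[]" X u R] by (simp add: presented_group_one)
next
  fix x
  assume "x \<in> carrier (presented_group X R)"
  then obtain u where u: "u \<in> words X" "x = wclass X R u"
    by auto
  then have "wclass X R (winv u) \<otimes>\<^bsub>presented_group X R\<^esub> x = \<one>\<^bsub>presented_group X R\<^esub>"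
    by (simp add: presented_group_winv_mult)
  moreover have "wclass X R (winv u) \<in> carrier (presented_group X R)"
    using u by simp
  ultimately show "\<exists>y\<in>carrier (presented_group X R). y \<otimes>\<^bsub>presented_group X R\<^esub> x = \<one>\<^bsub>presented_group X R\<^esub>"
    by blast
qed

lemma presented_group_inv:
  "u \<in> words X \<Longrightarrow> inv\<^bsub>presented_group X R\<^esub> (wclass X R u) = wclass X R (winv u)"
proof -
  interpret group "presented_group X R"
    by (rule group_presented_group)
  assume "u \<in> words X"
  then show ?thesis
    by (intro inv_equality) (simp_all add: presented_group_winv_mult)
qed

lemma presented_group_pow_letter:
  "x \<in> X \<Longrightarrow>
   wclass X R [(x, False)] [^]\<^bsub>presented_group X R\<^esub> (m :: nat) = wclass X R (replicate m (x, False))"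
proof (induction m)
  case 0
  then show ?case by (simp add: presented_group_one)
next
  case (Suc m)
  have "replicate (Suc m) (x, False) = replicate m (x, False) @ [(x, False)]"
    by (simp add: replicate_append_same)
  with Suc show ?case
    by (simp add: presented_group_mult)
qed

definition eval_word :: "('g, 'b) monoid_scheme \<Rightarrow> ('a \<Rightarrow> 'g) \<Rightarrow> 'a word \<Rightarrow> 'g" where
  "eval_word G \<phi> w =
     foldr (\<lambda>(x, e) acc. (if e then inv\<^bsub>G\<^esub> (\<phi> x) else \<phi> x) \<otimes>\<^bsub>G\<^esub> acc) w \<one>\<^bsub>G\<^esub>"

lemma eval_word_Nil [simp]: "eval_word G \<phi> [] = \<one>\<^bsub>G\<^esub>"
  by (simp add: eval_word_def)

lemma eval_word_Cons [simp]:
  "eval_word G \<phi> ((x, e) # w) = (if e then inv\<^bsub>G\<^esub> (\<phi> x) else \<phi> x) \<otimes>\<^bsub>G\<^esub> eval_word G \<phi> w"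
  by (simp add: eval_word_def)

context group
begin

lemma eval_word_closed: "\<phi> ` X \<subseteq> carrier G \<Longrightarrow> w \<in> words X \<Longrightarrow> eval_word G \<phi> w \<in> carrier G"
proof (induction w)
  case (Cons l w)
  then show ?case by (cases l) auto
qed simp

lemma eval_word_append:
  "\<phi> ` X \<subseteq> carrier G \<Longrightarrow> u \<in> words X \<Longrightarrow> v \<in> words X \<Longrightarrow>
   eval_word G \<phi> (u @ v) = eval_word G \<phi> u \<otimes> eval_word G \<phi> v"
proof (induction u)
  case Nil
  then show ?case using eval_word_closed[of \<phi> X v] by simp
next
  case (Cons l w)
  then show ?case using eval_word_closed[OF Cons.prems(1)] by (cases l) (auto simp: m_assoc)
qed

lemma eval_word_winv:
  "\<phi> ` X \<subseteq> carrier G \<Longrightarrow> w \<in> words X \<Longrightarrow> eval_word G \<phi> (winv w) = inv (eval_word G \<phi> w)"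
proof (induction w)
  case (Cons l w)
  obtain x e where l: "l = (x, e)"
    by force
  with Cons have "\<phi> x \<in> carrier G" "w \<in> words X"
    by auto
  with Cons l show ?case
    by (auto simp: eval_word_append eval_word_closed inv_mult_group)
qed simp

lemma eval_word_replicate: "\<phi> x \<in> carrier G \<Longrightarrow> eval_word G \<phi> (replicate m (x, False)) = \<phi> x [^] m"
  by (induction m) (simp_all add: nat_pow_Suc2[symmetric] del: nat_pow_Suc)

lemma eval_word_gletter: "\<phi> x \<in> carrier G \<Longrightarrow> eval_word G \<phi> (gletter x) = \<phi> x"
  by (simp add: gletter_def)

lemma eval_word_in_subgroup:
  assumes "subgroup S G" and "\<phi> ` X \<subseteq> S"
  shows "w \<in> words X \<Longrightarrow> eval_word G \<phi> w \<in> S"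
proof (induction w)
  case (Cons l w)
  obtain x e where "l = (x, e)"
    by force
  with Cons assms show ?case
    by (auto intro: subgroup.m_closed subgroup.m_inv_closed)
qed (simp add: assms(1) subgroup.one_closed)

lemma eval_word_pres_eq:
  assumes \<phi>: "\<phi> ` X \<subseteq> carrier G" and rel: "\<forall>r\<in>R. r \<in> words X \<longrightarrow> eval_word G \<phi> r = \<one>"
  shows "pres_eq X R u v \<Longrightarrow> eval_word G \<phi> u = eval_word G \<phi> v"
proof (induction rule: pres_eq.induct)
  case (cancel u v x e)
  then have "\<phi> x \<in> carrier G"
    using \<phi> by auto
  with cancel \<phi> show ?case
    using eval_word_closed[OF \<phi>, of u] eval_word_closed[OF \<phi>, of v]
    by (cases e) (simp_all add: eval_word_append m_assoc[symmetric])
next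
  case (relator u v r)
  then show ?case using \<phi> rel by (simp add: eval_word_append eval_word_closed)
qed simp_all

end

section \<open>Homomorphisms out of a presented group\<close>

definition presented_lift :: "('g, 'b) monoid_scheme \<Rightarrow> ('a \<Rightarrow> 'g) \<Rightarrow> 'a word set \<Rightarrow> 'g" where
  "presented_lift G \<phi> A = eval_word G \<phi> (SOME w. w \<in> A)"

context group
begin

lemma presented_lift_wclass:
  assumes \<phi>: "\<phi> ` X \<subseteq> carrier G" and rel: "\<forall>r\<in>R. r \<in> words X \<longrightarrow> eval_word G \<phi> r = \<one>"
    and u: "u \<in> words X"
  shows "presented_lift G \<phi> (wclass X R u) = eval_word G \<phi> u"
proof -
  have "(SOME w. w \<in> wclass X R u) \<in> wclass X R u"
    using wclass_self[OF u] by (rule someI)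
  then have "pres_eq X R u (SOME w. w \<in> wclass X R u)"
    by (simp add: wclass_def)
  then show ?thesis
    unfolding presented_lift_def using eval_word_pres_eq[OF \<phi> rel] by simp
qed

lemma presented_lift_hom:
  assumes \<phi>: "\<phi> ` X \<subseteq> carrier G" and rel: "\<forall>r\<in>R. r \<in> words X \<longrightarrow> eval_word G \<phi> r = \<one>"
  shows "presented_lift G \<phi> \<in> hom (presented_group X R) G"
proof (rule homI)
  fix x
  assume "x \<in> carrier (presented_group X R)"
  then obtain u where "u \<in> words X" "x = wclass X R u"
    by auto
  then show "presented_lift G \<phi> x \<in> carrier G"
    using presented_lift_wclass[OF \<phi> rel] eval_word_closed[OF \<phi>] by simp
next
  fix x y
  assume "x \<in> carrier (presented_group X R)" "y \<in> carrier (presented_group X R)"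
  then obtain u v where "u \<in> words X" "x = wclass X R u" "v \<in> words X" "y = wclass X R v"
    by auto
  then show "presented_lift G \<phi> (x \<otimes>\<^bsub>presented_group X R\<^esub> y) =
      presented_lift G \<phi> x \<otimes> presented_lift G \<phi> y"
    using presented_lift_wclass[OF \<phi> rel] by (simp add: presented_group_mult eval_word_append[OF \<phi>])
qed

lemma hom_presented_group_wclass:
  assumes f: "f \<in> hom (presented_group X R) G"
  shows "w \<in> words X \<Longrightarrow> f (wclass X R w) = eval_word G (\<lambda>x. f (wclass X R [(x, False)])) w"
proof (induction w)
  case Nil
  show ?case
    using hom_one[OF f group_presented_group is_group] by (simp add: presented_group_one)
next
  case (Cons l w)
  obtain x e where l: "l = (x, e)"
    by force
  with Cons have x: "x \<in> X" "w \<in> words X"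
    by auto
  interpret f: group_hom "presented_group X R" G f
    using f group_presented_group is_group by (simp add: group_hom_def group_hom_axioms_def)
  have "wclass X R [(x, True)] = inv\<^bsub>presented_group X R\<^esub> wclass X R [(x, False)]"
    using x by (simp add: presented_group_inv)
  then have letter: "f (wclass X R [(x, e)]) =
      (if e then inv (f (wclass X R [(x, False)])) else f (wclass X R [(x, False)]))"
    using x by (cases e) simp_all
  have "f (wclass X R ((x, e) # w)) = f (wclass X R [(x, e)] \<otimes>\<^bsub>presented_group X R\<^esub> wclass X R w)"
    using presented_group_mult[of "[(x, e)]" X w R] x by simp
  also have "\<dots> = f (wclass X R [(x, e)]) \<otimes> f (wclass X R w)"
    using x by (intro f.hom_mult) auto
  finally show ?case
    using Cons.IH x letter l by simp
qed

lemma hom_presented_group_relator: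
  assumes "f \<in> hom (presented_group X R) G" and "r \<in> R" and "r \<in> words X"
  shows "eval_word G (\<lambda>x. f (wclass X R [(x, False)])) r = \<one>"
  using hom_presented_group_wclass[OF assms(1,3)] presented_group_relator[OF assms(2,3)]
    hom_one[OF assms(1) group_presented_group is_group]
  by simp

lemma left_mult_compatible_inv:
  assumes H: "group H" and \<psi>: "\<And>q. q \<in> carrier G \<Longrightarrow> \<psi> q \<in> carrier H"
    and x: "x \<in> carrier G" and y: "y \<in> carrier H"
    and compat: "\<And>q. q \<in> carrier G \<Longrightarrow> \<psi> (x \<otimes> q) = y \<otimes>\<^bsub>H\<^esub> \<psi> q"
    and q: "q \<in> carrier G"
  shows "\<psi> (inv x \<otimes> q) = inv\<^bsub>H\<^esub> y \<otimes>\<^bsub>H\<^esub> \<psi> q"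
proof -
  interpret H: group H
    by (rule H)
  have "\<psi> q = y \<otimes>\<^bsub>H\<^esub> \<psi> (inv x \<otimes> q)"
    using compat[of "inv x \<otimes> q"] x q by (simp add: m_assoc[symmetric])
  then show ?thesis
    using H.inv_solve_left \<psi> x y q by simp
qed

lemma presented_lift_left_inverse:
  assumes \<phi>: "\<phi> ` X \<subseteq> carrier G" and rel: "\<forall>r\<in>R. r \<in> words X \<longrightarrow> eval_word G \<phi> r = \<one>"
    and \<psi>_carrier: "\<And>q. q \<in> carrier G \<Longrightarrow> \<psi> q \<in> carrier (presented_group X R)"
    and \<psi>_one: "\<psi> \<one> = \<one>\<^bsub>presented_group X R\<^esub>"
    and \<psi>_gen: "\<And>x q. x \<in> X \<Longrightarrow> q \<in> carrier G \<Longrightarrow>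
      \<psi> (\<phi> x \<otimes> q) = wclass X R [(x, False)] \<otimes>\<^bsub>presented_group X R\<^esub> \<psi> q"
    and A: "A \<in> carrier (presented_group X R)"
  shows "\<psi> (presented_lift G \<phi> A) = A"
proof -
  have "\<psi> (eval_word G \<phi> w) = wclass X R w" if "w \<in> words X" for w
    using that
  proof (induction w)
    case Nil
    then show ?case
      using \<psi>_one by (simp add: presented_group_one)
  next
    case (Cons l w)
    obtain x e where l: "l = (x, e)"
      by force
    with Cons have x: "x \<in> X" "\<phi> x \<in> carrier G" and w: "w \<in> words X"
      using \<phi> by auto
    have q: "eval_word G \<phi> w \<in> carrier G"
      using \<phi> w by (rule eval_word_closed)
    have letter: "wclass X R [(x, False)] \<in> carrier (presented_group X R)"
      unfolding presented_group_carrier using x by (intro imageI) simp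
    have "wclass X R ((x, e) # w) = wclass X R [(x, e)] \<otimes>\<^bsub>presented_group X R\<^esub> wclass X R w"
      using x w presented_group_mult[of "[(x, e)]" X w R] by simp
    then show ?case
      using Cons.IH w x q l \<psi>_gen
        left_mult_compatible_inv[where H = "presented_group X R" and \<psi> = \<psi>,
          OF group_presented_group \<psi>_carrier x(2) letter \<psi>_gen[OF x(1)] q]
      by (cases e) (simp_all add: presented_group_inv)
  qed
  moreover obtain w where "w \<in> words X" "A = wclass X R w"
    using A by auto
  ultimately show ?thesis
    using presented_lift_wclass[OF \<phi> rel] by simp
qed

lemma generate_surj_hom_presented_group:
  assumes f: "f \<in> hom (presented_group X R) G"
    and surj: "f ` carrier (presented_group X R) = carrier G"
  shows "generate G ((\<lambda>x. f (wclass X R [(x, False)])) ` X) = carrier G"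
    (is "generate G (?\<rho> ` X) = _")
proof
  have \<rho>: "?\<rho> ` X \<subseteq> carrier G"
    using f by (auto intro: hom_in_carrier)
  then show "generate G (?\<rho> ` X) \<subseteq> carrier G"
    by (rule generate_incl)
  show "carrier G \<subseteq> generate G (?\<rho> ` X)"
  proof
    fix y
    assume "y \<in> carrier G"
    then obtain w where w: "w \<in> words X" and y: "y = f (wclass X R w)"
      using surj by auto
    have "?\<rho> ` X \<subseteq> generate G (?\<rho> ` X)"
      by (auto intro: generate.incl)
    then have "eval_word G ?\<rho> w \<in> generate G (?\<rho> ` X)"
      using generate_is_subgroup[OF \<rho>] w by (intro eval_word_in_subgroup)
    then show "y \<in> generate G (?\<rho> ` X)"
      using hom_presented_group_wclass[OF f w] y by simp
  qed
qed

lemma presented_lift_image: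
  assumes \<rho>: "\<rho> ` X \<subseteq> carrier G" and rel: "\<forall>r\<in>R. r \<in> words X \<longrightarrow> eval_word G \<rho> r = \<one>"
    and gen: "generate G (\<rho> ` X) = carrier G"
  shows "presented_lift G \<rho> ` carrier (presented_group X R) = carrier G"
proof -
  interpret f: group_hom "presented_group X R" G "presented_lift G \<rho>"
    using presented_lift_hom[OF \<rho> rel] group_presented_group is_group
    by (simp add: group_hom_def group_hom_axioms_def)
  have "\<rho> x = presented_lift G \<rho> (wclass X R [(x, False)])" if "x \<in> X" for x
    using that \<rho> presented_lift_wclass[OF \<rho> rel, of "[(x, False)]"] by auto
  moreover have "wclass X R [(x, False)] \<in> carrier (presented_group X R)" if "x \<in> X" for x
    unfolding presented_group_carrier using that by (intro imageI) simp
  ultimately have "\<rho> ` X \<subseteq> presented_lift G \<rho> ` carrier (presented_group X R)"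
    by blast
  then have "generate G (\<rho> ` X) \<subseteq> presented_lift G \<rho> ` carrier (presented_group X R)"
    by (intro generate_subgroup_incl f.img_is_subgroup)
  then show ?thesis
    using gen f.hom_closed by blast
qed

lemma surj_hom_presented_group_iff:
  "(\<exists>f. f \<in> hom (presented_group X R) G \<and> f ` carrier (presented_group X R) = carrier G) \<longleftrightarrow>
   (\<exists>\<rho>. \<rho> ` X \<subseteq> carrier G \<and> (\<forall>r\<in>R. r \<in> words X \<longrightarrow> eval_word G \<rho> r = \<one>) \<and>
        generate G (\<rho> ` X) = carrier G)"
proof
  assume "\<exists>f. f \<in> hom (presented_group X R) G \<and> f ` carrier (presented_group X R) = carrier G"
  then obtain f where f: "f \<in> hom (presented_group X R) G"
    and surj: "f ` carrier (presented_group X R) = carrier G"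
    by blast
  have "(\<lambda>x. f (wclass X R [(x, False)])) ` X \<subseteq> carrier G"
    using f by (auto intro: hom_in_carrier)
  with hom_presented_group_relator[OF f] generate_surj_hom_presented_group[OF f surj]
  show "\<exists>\<rho>. \<rho> ` X \<subseteq> carrier G \<and> (\<forall>r\<in>R. r \<in> words X \<longrightarrow> eval_word G \<rho> r = \<one>) \<and>
      generate G (\<rho> ` X) = carrier G"
    by blast
next
  assume "\<exists>\<rho>. \<rho> ` X \<subseteq> carrier G \<and> (\<forall>r\<in>R. r \<in> words X \<longrightarrow> eval_word G \<rho> r = \<one>) \<and>
      generate G (\<rho> ` X) = carrier G"
  then obtain \<rho> where "\<rho> ` X \<subseteq> carrier G" "\<forall>r\<in>R. r \<in> words X \<longrightarrow> eval_word G \<rho> r = \<one>"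
    "generate G (\<rho> ` X) = carrier G"
    by blast
  then show "\<exists>f. f \<in> hom (presented_group X R) G \<and> f ` carrier (presented_group X R) = carrier G"
    by (intro exI[of _ "presented_lift G \<rho>"] conjI presented_lift_hom presented_lift_image)
qed

end

lemma surj_hom_compose:
  "f \<in> hom G H \<Longrightarrow> f ` carrier G = carrier H \<Longrightarrow> \<phi> \<in> hom H K \<Longrightarrow> \<phi> ` carrier H = carrier K \<Longrightarrow>
   \<phi> \<circ> f \<in> hom G K \<and> (\<phi> \<circ> f) ` carrier G = carrier K"
  using image_image[of \<phi> f "carrier G"] by (simp add: hom_compose)

definition commutator :: "('g, 'b) monoid_scheme \<Rightarrow> 'g \<Rightarrow> 'g \<Rightarrow> 'g" where
  "commutator G x y = x \<otimes>\<^bsub>G\<^esub> y \<otimes>\<^bsub>G\<^esub> inv\<^bsub>G\<^esub> x \<otimes>\<^bsub>G\<^esub> inv\<^bsub>G\<^esub> y"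

fun iter_commutator :: "('g, 'b) monoid_scheme \<Rightarrow> 'g \<Rightarrow> 'g \<Rightarrow> nat \<Rightarrow> 'g" where
  "iter_commutator G x y 0 = x"
| "iter_commutator G x y (Suc l) = commutator G (iter_commutator G x y l) y"

lemma iter_commutator_Suc_inner:
  "iter_commutator G x y (Suc l) = iter_commutator G (commutator G x y) y l"
  by (induction l) auto

lemma words_itcomm: "w \<in> words X \<Longrightarrow> g \<in> words X \<Longrightarrow> itcomm w g l \<in> words X"
  by (induction l) (auto simp: wcomm_def)

context group
begin

lemma commutator_closed: "x \<in> carrier G \<Longrightarrow> y \<in> carrier G \<Longrightarrow> commutator G x y \<in> carrier G"
  by (simp add: commutator_def)

lemma iter_commutator_closed:
  "x \<in> carrier G \<Longrightarrow> y \<in> carrier G \<Longrightarrow> iter_commutator G x y l \<in> carrier G"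
  by (induction l) (auto simp: commutator_closed)

lemma commutator_eq_one_iff:
  "x \<in> carrier G \<Longrightarrow> y \<in> carrier G \<Longrightarrow> commutator G x y = \<one> \<longleftrightarrow> x \<otimes> y = y \<otimes> x"
  using inv_solve_right'[of \<one> "x \<otimes> y \<otimes> inv x" y] inv_solve_right'[of y "x \<otimes> y" x]
  by (simp add: commutator_def)

lemma iter_commutator_one: "x \<in> carrier G \<Longrightarrow> iter_commutator G x \<one> (Suc l) = \<one>"
  by (induction l) (simp_all add: commutator_def)

lemma eval_word_wcomm:
  "\<phi> ` X \<subseteq> carrier G \<Longrightarrow> u \<in> words X \<Longrightarrow> v \<in> words X \<Longrightarrow>
   eval_word G \<phi> (wcomm u v) = commutator G (eval_word G \<phi> u) (eval_word G \<phi> v)"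
  by (simp add: wcomm_def commutator_def eval_word_append eval_word_winv eval_word_closed m_assoc)

lemma eval_word_itcomm:
  assumes "\<phi> ` X \<subseteq> carrier G" "w \<in> words X" "g \<in> words X"
  shows "eval_word G \<phi> (itcomm w g l) = iter_commutator G (eval_word G \<phi> w) (eval_word G \<phi> g) l"
  by (induction l) (simp_all add: eval_word_wcomm[OF assms(1) words_itcomm[OF assms(2,3)] assms(3)])

end

lemma (in group_hom) hom_iter_commutator:
  "x \<in> carrier G \<Longrightarrow> y \<in> carrier G \<Longrightarrow> h (iter_commutator G x y l) = iter_commutator H (h x) (h y) l"
  by (induction l) (simp_all add: commutator_def G.iter_commutator_closed)

lemma (in group) involutions_commute:
  assumes "x \<in> carrier G" "y \<in> carrier G" "x \<otimes> x = \<one>" "y \<otimes> y = \<one>" "x \<otimes> y \<otimes> x \<otimes> y = \<one>"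
  shows "x \<otimes> y = y \<otimes> x"
proof -
  have inv_self: "inv z = z" if "z \<in> carrier G" "z \<otimes> z = \<one>" for z
    using that by (intro inv_equality) auto
  have "inv (x \<otimes> y) = x \<otimes> y"
    using assms by (intro inv_self) (simp_all add: m_assoc)
  then show ?thesis
    using assms inv_self by (simp add: inv_mult_group)
qed

lemma (in group) pow_odd_involution:
  fixes m :: nat
  assumes "x \<in> carrier G" "x \<otimes> x = \<one>" "odd m"
  shows "x [^] m = x"
proof -
  obtain k where m: "m = Suc (2 * k)"
    using assms(3) oddE by fastforce
  have "x [^] (2 :: nat) = \<one>"
    using assms(1,2) by (simp add: numeral_2_eq_2)
  then have "x [^] (2 * k) = \<one>"
    using assms(1) by (simp add: nat_pow_pow[symmetric])
  then show ?thesis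
    using assms(1) m by simp
qed

section \<open>A concrete dihedral group\<close>

text \<open>The pair \<open>(e, i)\<close> stands for \<open>s\<^sup>e t\<^sup>i\<close>, where \<open>0 \<le> i < N\<close>.\<close>

definition dihedral_model :: "nat \<Rightarrow> (bool \<times> int) monoid" where
  "dihedral_model N =
     \<lparr>carrier = {p. 0 \<le> snd p \<and> snd p < int N},
      mult = (\<lambda>(e1, i1) (e2, i2). (e1 \<noteq> e2, ((if e2 then - i1 else i1) + i2) mod int N)),
      one = (False, 0)\<rparr>"

lemma dihedral_model_carrier [simp]: "(e, i) \<in> carrier (dihedral_model N) \<longleftrightarrow> 0 \<le> i \<and> i < int N"
  by (simp add: dihedral_model_def)

lemma dihedral_model_mult [simp]:
  "(e1, i1) \<otimes>\<^bsub>dihedral_model N\<^esub> (e2, i2) = (e1 \<noteq> e2, ((if e2 then - i1 else i1) + i2) mod int N)"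
  by (simp add: dihedral_model_def)

lemma dihedral_model_one [simp]: "\<one>\<^bsub>dihedral_model N\<^esub> = (False, 0)"
  by (simp add: dihedral_model_def)

lemma group_dihedral_model:
  assumes "N > 0"
  shows "group (dihedral_model N)"
proof (rule groupI)
  fix x y
  assume "x \<in> carrier (dihedral_model N)" "y \<in> carrier (dihedral_model N)"
  then show "x \<otimes>\<^bsub>dihedral_model N\<^esub> y \<in> carrier (dihedral_model N)"
    using assms by (cases x, cases y) auto
next
  fix x y z
  assume "x \<in> carrier (dihedral_model N)" "y \<in> carrier (dihedral_model N)"
    "z \<in> carrier (dihedral_model N)"
  then show "x \<otimes>\<^bsub>dihedral_model N\<^esub> y \<otimes>\<^bsub>dihedral_model N\<^esub> z =
      x \<otimes>\<^bsub>dihedral_model N\<^esub> (y \<otimes>\<^bsub>dihedral_model N\<^esub> z)"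
    by (cases x, cases y, cases z) (auto simp: mod_simps algebra_simps)
next
  fix x
  assume x: "x \<in> carrier (dihedral_model N)"
  obtain e i where xe: "x = (e, i)"
    by force
  show "\<exists>y\<in>carrier (dihedral_model N). y \<otimes>\<^bsub>dihedral_model N\<^esub> x = \<one>\<^bsub>dihedral_model N\<^esub>"
  proof (cases e)
    case True
    then show ?thesis
      using x xe by (intro bexI[of _ "(True, i)"]) auto
  next
    case False
    then show ?thesis
      using x xe assms by (intro bexI[of _ "(False, (- i) mod int N)"]) (auto simp: mod_simps)
  qed
qed (use assms in auto)

lemma dihedral_model_inv:
  assumes "N > 0" and "(e, i) \<in> carrier (dihedral_model N)"
  shows "inv\<^bsub>dihedral_model N\<^esub> (e, i) = (if e then (e, i) else (False, (- i) mod int N))"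
proof -
  interpret group "dihedral_model N"
    using assms(1) by (rule group_dihedral_model)
  show ?thesis
  proof (cases e)
    case True
    then show ?thesis
      using assms by (intro inv_equality) auto
  next
    case False
    then show ?thesis
      using assms by (intro inv_equality) (auto simp: mod_simps)
  qed
qed

lemma dihedral_model_rotation_pow:
  assumes "(False, \<delta>) \<in> carrier (dihedral_model N)"
  shows "(False, \<delta>) [^]\<^bsub>dihedral_model N\<^esub> (m :: nat) = (False, (\<delta> * int m) mod int N)"
proof (induction m)
  case 0
  then show ?case by simp
next
  case (Suc m)
  then show ?case
    using assms by (simp add: mod_simps algebra_simps)
qed

lemma dihedral_model_rotation_int_pow:
  assumes "N > 0" and "(False, \<delta>) \<in> carrier (dihedral_model N)"
  shows "(False, \<delta>) [^]\<^bsub>dihedral_model N\<^esub> (m :: int) = (False, (\<delta> * m) mod int N)"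
proof -
  interpret group "dihedral_model N"
    using assms(1) by (rule group_dihedral_model)
  have "m = int (nat m) \<or> m = - int (nat (- m))"
    by linarith
  then show ?thesis
  proof
    assume "m = int (nat m)"
    then show ?thesis
      using assms(2) by (metis int_pow_int dihedral_model_rotation_pow)
  next
    assume m: "m = - int (nat (- m))"
    have "(False, \<delta>) [^]\<^bsub>dihedral_model N\<^esub> m =
        inv\<^bsub>dihedral_model N\<^esub> (False, (\<delta> * int (nat (- m))) mod int N)"
      using assms(2) m int_pow_neg_int dihedral_model_rotation_pow by metis
    also have "\<dots> = (False, (- ((\<delta> * int (nat (- m))) mod int N)) mod int N)"
      using assms(1) by (simp add: dihedral_model_inv)
    also have "\<dots> = (False, (\<delta> * m) mod int N)"
      using m by (metis add.inverse_inverse mod_minus_eq mult_minus_right)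
    finally show ?thesis .
  qed
qed

lemma dihedral_model_conj_rotation:
  assumes "N > 0" and x: "x \<in> carrier (dihedral_model N)"
    and d: "(False, \<delta>) \<in> carrier (dihedral_model N)"
  shows "x \<otimes>\<^bsub>dihedral_model N\<^esub> (False, \<delta>) \<otimes>\<^bsub>dihedral_model N\<^esub> inv\<^bsub>dihedral_model N\<^esub> x =
    (False, \<delta>) [^]\<^bsub>dihedral_model N\<^esub> (if fst x then - 1 else 1 :: int)"
proof -
  obtain e i where xe: "x = (e, i)"
    by force
  have "(False, (- i) mod int N) \<in> carrier (dihedral_model N)"
    using assms(1) by simp
  then show ?thesis
    using assms xe by (cases e) (simp_all add: dihedral_model_inv dihedral_model_rotation_int_pow mod_simps)
qed

lemma dihedral_model_iter_commutator_rotation: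
  assumes "N > 0" and "(False, z) \<in> carrier (dihedral_model N)" and "(True, y) \<in> carrier (dihedral_model N)"
  shows "iter_commutator (dihedral_model N) (False, z) (True, y) l = (False, (2 ^ l * z) mod int N)"
proof (induction l)
  case (Suc l)
  have "(False, (- ((2 ^ l * z) mod int N)) mod int N) \<in> carrier (dihedral_model N)"
    using assms(1) by simp
  with Suc show ?case
    using assms by (simp add: commutator_def dihedral_model_inv mod_simps algebra_simps)
qed (use assms in simp)

lemma dihedral_model_iter_commutator_reflections:
  assumes "N > 0" and "(True, x) \<in> carrier (dihedral_model N)" and "(True, y) \<in> carrier (dihedral_model N)"
  shows "iter_commutator (dihedral_model N) (True, x) (True, y) (Suc l) =
    (False, (2 ^ Suc l * (y - x)) mod int N)"
proof -
  have "commutator (dihedral_model N) (True, x) (True, y) = (False, (2 * (y - x)) mod int N)"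
    using assms by (simp add: commutator_def dihedral_model_inv mod_simps algebra_simps)
  moreover have "iter_commutator (dihedral_model N) (False, (2 * (y - x)) mod int N) (True, y) l =
      (False, (2 ^ l * ((2 * (y - x)) mod int N)) mod int N)"
    using assms by (intro dihedral_model_iter_commutator_rotation) auto
  ultimately show ?thesis
    by (simp add: iter_commutator_Suc_inner mod_simps algebra_simps del: iter_commutator.simps)
qed

definition dihedral_residue_subgroup :: "nat \<Rightarrow> int \<Rightarrow> int \<Rightarrow> (bool \<times> int) set" where
  "dihedral_residue_subgroup N p \<alpha> =
     {(e, i). 0 \<le> i \<and> i < int N \<and> i mod p = (if e then \<alpha> mod p else 0)}"

lemma subgroup_dihedral_residue_subgroup:
  assumes N: "N > 0" and p: "p dvd int N"
  shows "subgroup (dihedral_residue_subgroup N p \<alpha>) (dihedral_model N)"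
proof
  have reduce: "(z mod int N) mod p = z mod p" for z
    using p by (simp add: mod_mod_cancel)
  fix x y
  assume x: "x \<in> dihedral_residue_subgroup N p \<alpha>" and y: "y \<in> dihedral_residue_subgroup N p \<alpha>"
  obtain e1 i1 e2 i2 where xy: "x = (e1, i1)" "y = (e2, i2)"
    by force
  have m1: "i1 mod p = (if e1 then \<alpha> mod p else 0)" and m2: "i2 mod p = (if e2 then \<alpha> mod p else 0)"
    using x y xy by (auto simp: dihedral_residue_subgroup_def)
  have "((if e2 then - i1 else i1) + i2) mod p =
      ((if e2 then - (i1 mod p) else i1 mod p) + i2 mod p) mod p"
    by (cases e2) (simp_all add: mod_simps)
  also have "\<dots> = (if e1 \<noteq> e2 then \<alpha> mod p else 0)"
    unfolding m1 m2 by (cases e1; cases e2) (simp_all add: mod_simps)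
  finally have "((if e2 then - i1 else i1) + i2) mod p = (if e1 \<noteq> e2 then \<alpha> mod p else 0)" .
  then show "x \<otimes>\<^bsub>dihedral_model N\<^esub> y \<in> dihedral_residue_subgroup N p \<alpha>"
    using xy N reduce by (simp add: dihedral_residue_subgroup_def)
  have "(- i1) mod p = 0" if "i1 mod p = 0"
    using that by (simp add: mod_minus_eq[of i1 p, symmetric])
  then show "inv\<^bsub>dihedral_model N\<^esub> x \<in> dihedral_residue_subgroup N p \<alpha>"
    using x xy N reduce by (auto simp: dihedral_residue_subgroup_def dihedral_model_inv split: if_splits)
qed (use N in \<open>auto simp: dihedral_residue_subgroup_def dihedral_model_def\<close>)

definition dihedral_reduce :: "nat \<Rightarrow> bool \<times> int \<Rightarrow> bool \<times> int" where
  "dihedral_reduce c p = (fst p, snd p mod int c)"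

lemma dihedral_reduce_hom:
  assumes "c > 0" and "c dvd N"
  shows "dihedral_reduce c \<in> hom (dihedral_model N) (dihedral_model c)"
proof (rule homI)
  fix p
  assume "p \<in> carrier (dihedral_model N)"
  then show "dihedral_reduce c p \<in> carrier (dihedral_model c)"
    using assms(1) by (cases p) (simp add: dihedral_reduce_def)
next
  fix p q
  assume "p \<in> carrier (dihedral_model N)" "q \<in> carrier (dihedral_model N)"
  obtain e1 i1 e2 i2 where pq: "p = (e1, i1)" "q = (e2, i2)"
    by force
  have "(z mod int N) mod int c = z mod int c" for z
    using assms(2) by (simp add: mod_mod_cancel)
  then show "dihedral_reduce c (p \<otimes>\<^bsub>dihedral_model N\<^esub> q) =
      dihedral_reduce c p \<otimes>\<^bsub>dihedral_model c\<^esub> dihedral_reduce c q"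
    using pq by (cases e2) (simp_all add: dihedral_reduce_def mod_simps)
qed

lemma dihedral_reduce_image:
  assumes "0 < c" and "c \<le> N"
  shows "dihedral_reduce c ` carrier (dihedral_model N) = carrier (dihedral_model c)"
proof
  show "dihedral_reduce c ` carrier (dihedral_model N) \<subseteq> carrier (dihedral_model c)"
    using assms(1) by (auto simp: dihedral_reduce_def dihedral_model_def)
  show "carrier (dihedral_model c) \<subseteq> dihedral_reduce c ` carrier (dihedral_model N)"
  proof
    fix q
    assume q: "q \<in> carrier (dihedral_model c)"
    then have "q = dihedral_reduce c q" "q \<in> carrier (dihedral_model N)"
      using assms by (auto simp: dihedral_reduce_def dihedral_model_def)
    then show "q \<in> dihedral_reduce c ` carrier (dihedral_model N)"
      by blast
  qed
qed

text \<open>For \<open>N = 2 M\<close>, the embedding of the dihedral group of order \<open>2 M\<close> into that of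
  order \<open>2 N\<close> with \<open>s \<mapsto> s t\<^sup>\<alpha>\<close> and \<open>t \<mapsto> t\<^sup>2\<^sup>\<delta>\<close>.\<close>

definition dihedral_embed :: "nat \<Rightarrow> int \<Rightarrow> int \<Rightarrow> bool \<times> int \<Rightarrow> bool \<times> int" where
  "dihedral_embed N \<alpha> \<delta> p = (fst p, ((if fst p then \<alpha> else 0) + 2 * snd p * \<delta>) mod int N)"

lemma dihedral_embed_hom:
  assumes N: "N = 2 * M" and M: "M > 0"
  shows "dihedral_embed N \<alpha> \<delta> \<in> hom (dihedral_model M) (dihedral_model N)"
proof (rule homI)
  fix p
  assume "p \<in> carrier (dihedral_model M)"
  then show "dihedral_embed N \<alpha> \<delta> p \<in> carrier (dihedral_model N)"
    using N M by (cases p) (simp add: dihedral_embed_def)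
next
  fix p q
  assume "p \<in> carrier (dihedral_model M)" "q \<in> carrier (dihedral_model M)"
  obtain e1 m1 e2 m2 where pq: "p = (e1, m1)" "q = (e2, m2)"
    by force
  have double: "(a + 2 * (x mod int M) * \<delta>) mod int N = (a + 2 * x * \<delta>) mod int N" for x a
  proof -
    have "2 * (x mod int M) = (2 * x) mod int N"
      using N by (simp add: mod_mult_mult1)
    then show ?thesis
      by (metis mod_add_right_eq mod_mult_left_eq)
  qed
  have double0: "(2 * (x mod int M) * \<delta>) mod int N = (2 * x * \<delta>) mod int N" for x
    using double[of 0] by simp
  show "dihedral_embed N \<alpha> \<delta> (p \<otimes>\<^bsub>dihedral_model M\<^esub> q) =
      dihedral_embed N \<alpha> \<delta> p \<otimes>\<^bsub>dihedral_model N\<^esub> dihedral_embed N \<alpha> \<delta> q"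
    unfolding pq
    apply (cases e1; cases e2)
       apply (simp_all only: dihedral_embed_def dihedral_model_mult fst_conv snd_conv if_True if_False
        simp_thms double double0)
       apply (simp_all add: mod_simps)
     apply (simp_all add: algebra_simps)
    done
qed

lemma dihedral_embed_eq_one:
  assumes N: "N = 2 * M" and cop: "coprime \<delta> (int N)" and p: "p \<in> carrier (dihedral_model M)"
    and "dihedral_embed N \<alpha> \<delta> p = (False, 0)"
  shows "p = (False, 0)"
proof -
  obtain e m where em: "p = (e, m)"
    by force
  with assms have e: "\<not> e" and "(2 * m * \<delta>) mod int N = 0"
    by (simp_all add: dihedral_embed_def split: if_splits)
  then have "int N dvd (2 * m) * \<delta>"
    by (simp add: mod_eq_0_iff_dvd)
  then have "int N dvd 2 * m"
    using cop by (simp add: coprime_commute coprime_dvd_mult_left_iff)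
  then have "int M dvd m"
    using N by simp
  then have "m = 0"
    using p em by (auto dest: zdvd_imp_le)
  then show ?thesis
    using e em by simp
qed

lemma coprime_mod_inverse_int:
  fixes \<delta> m :: int
  assumes "coprime \<delta> m"
  shows "\<exists>u. (\<delta> * u) mod m = 1 mod m"
proof -
  obtain u t where "u * \<delta> + t * m = gcd \<delta> m"
    using bezout_int by blast
  then have "u * \<delta> + t * m = 1"
    using assms by simp
  moreover have "(\<delta> * u) mod m = (u * \<delta> + t * m) mod m"
    by (simp add: mult.commute)
  ultimately show ?thesis
    by auto
qed

lemma dihedral_embed_onto_residue_subgroup:
  assumes N: "N = 2 * M" and M: "M > 0" and cop: "coprime \<delta> (int N)"
    and ev: "(e, v) \<in> dihedral_residue_subgroup N 2 \<alpha>"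
  shows "\<exists>p\<in>carrier (dihedral_model M). dihedral_embed N \<alpha> \<delta> p = (e, v)"
proof -
  obtain u where u: "(\<delta> * u) mod int N = 1 mod int N"
    using coprime_mod_inverse_int[OF cop] by blast
  have "2 dvd v - (if e then \<alpha> else 0)"
    using ev by (cases e) (auto simp: dihedral_residue_subgroup_def mod_eq_dvd_iff)
  then obtain w where w: "v - (if e then \<alpha> else 0) = 2 * w"
    by blast
  define m where "m = (u * w) mod int M"
  have "2 * m = (2 * (u * w)) mod int N"
    using N by (simp add: m_def mod_mult_mult1)
  then have "(2 * m * \<delta>) mod int N = (2 * (u * w) * \<delta>) mod int N"
    by (metis mod_mult_left_eq)
  also have "\<dots> = ((2 * w) * (\<delta> * u)) mod int N"
    by (simp add: algebra_simps)
  also have "\<dots> = ((2 * w) * ((\<delta> * u) mod int N)) mod int N"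
    by (simp add: mod_mult_right_eq)
  also have "\<dots> = (2 * w) mod int N"
    using u by (simp add: mod_mult_right_eq)
  finally have key: "(2 * m * \<delta>) mod int N = (2 * w) mod int N" .
  have "((if e then \<alpha> else 0) + 2 * m * \<delta>) mod int N =
      ((if e then \<alpha> else 0) + (2 * m * \<delta>) mod int N) mod int N"
    by (simp add: mod_simps)
  also have "\<dots> = ((if e then \<alpha> else 0) + 2 * w) mod int N"
    using key by (simp add: mod_simps)
  also have "\<dots> = v"
    using w ev by (simp add: dihedral_residue_subgroup_def)
  finally have "dihedral_embed N \<alpha> \<delta> (e, m) = (e, v)"
    by (simp add: dihedral_embed_def)
  moreover have "(e, m) \<in> carrier (dihedral_model M)"
    using M by (simp add: m_def)
  ultimately show ?thesis
    by blast
qed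

lemma dihedral_model_generate:
  assumes "N > 0" and "A \<subseteq> carrier (dihedral_model N)" and "(True, 0) \<in> A" and "(False, 1) \<in> A"
  shows "generate (dihedral_model N) A = carrier (dihedral_model N)"
proof -
  interpret group "dihedral_model N"
    using assms(1) by (rule group_dihedral_model)
  interpret S: subgroup "generate (dihedral_model N) A" "dihedral_model N"
    using assms(2) by (rule generate_is_subgroup)
  have t: "(False, 1) \<in> carrier (dihedral_model N)"
    using assms(2,4) by blast
  have "p \<in> generate (dihedral_model N) A" if p: "p \<in> carrier (dihedral_model N)" for p
  proof -
    obtain e i where pe: "p = (e, i)"
      by force
    have "(False, 1) [^]\<^bsub>dihedral_model N\<^esub> i \<in> generate (dihedral_model N) A"
      using subgroup_int_pow_closed[OF generate_is_subgroup[OF assms(2)] generate.incl[OF assms(4)]] .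
    moreover have "(False, 1) [^]\<^bsub>dihedral_model N\<^esub> i = (False, i)"
      using assms(1) p pe t by (simp add: dihedral_model_rotation_int_pow)
    ultimately have rot: "(False, i) \<in> generate (dihedral_model N) A"
      by simp
    show ?thesis
    proof (cases e)
      case True
      have "(True, 0) \<otimes>\<^bsub>dihedral_model N\<^esub> (False, i) \<in> generate (dihedral_model N) A"
        using S.m_closed generate.incl[OF assms(3)] rot by blast
      then show ?thesis
        using p pe True by simp
    next
      case False
      then show ?thesis
        using rot pe by simp
    qed
  qed
  then show ?thesis
    using generate_incl[OF assms(2)] by blast
qed

lemma dihedral_residue_subgroup_not_generate:
  assumes "1 < N" and "1 < p" and "p dvd int N" and "A \<subseteq> dihedral_residue_subgroup N p \<alpha>"
  shows "generate (dihedral_model N) A \<noteq> carrier (dihedral_model N)"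
proof -
  interpret group "dihedral_model N"
    using assms(1) by (intro group_dihedral_model) simp
  have "generate (dihedral_model N) A \<subseteq> dihedral_residue_subgroup N p \<alpha>"
    using assms by (intro generate_subgroup_incl subgroup_dihedral_residue_subgroup) auto
  moreover have "(False, 1) \<in> carrier (dihedral_model N)" "(False, 1) \<notin> dihedral_residue_subgroup N p \<alpha>"
    using assms(1,2) by (auto simp: dihedral_residue_subgroup_def)
  ultimately show ?thesis
    by blast
qed

lemma involution_commuting_with_reflection_in_residue_subgroup:
  assumes N: "N = 2 * M" "even M"
    and g: "g \<in> carrier (dihedral_model N)" "g \<otimes>\<^bsub>dihedral_model N\<^esub> g = (False, 0)"
    and a: "(True, \<alpha>) \<in> carrier (dihedral_model N)"
    and comm: "g \<otimes>\<^bsub>dihedral_model N\<^esub> (True, \<alpha>) = (True, \<alpha>) \<otimes>\<^bsub>dihedral_model N\<^esub> g"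
  shows "g \<in> dihedral_residue_subgroup N 2 \<alpha>"
proof -
  have half: "even x" if "int N dvd 2 * x" for x
  proof -
    have "int M dvd x"
      using that N(1) by simp
    moreover have "2 dvd int M"
      using N(2) by simp
    ultimately show "even x"
      by (metis dvd_trans)
  qed
  obtain e i where gi: "g = (e, i)"
    by force
  show ?thesis
  proof (cases e)
    case True
    then have "(- i + \<alpha>) mod int N = (- \<alpha> + i) mod int N"
      using comm gi by simp
    then have "int N dvd 2 * (\<alpha> - i)"
      by (simp add: mod_eq_dvd_iff algebra_simps)
    then have "even (\<alpha> - i)"
      by (rule half)
    then have "i mod 2 = \<alpha> mod 2"
      by presburger
    then show ?thesis
      using g gi True by (simp add: dihedral_residue_subgroup_def)
  next
    case False
    then have "int N dvd 2 * i"
      using g gi by (simp add: mod_eq_0_iff_dvd)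
    then have "i mod 2 = 0"
      using half by presburger
    then show ?thesis
      using g gi False by (simp add: dihedral_residue_subgroup_def)
  qed
qed

lemma eq_if_odd_dvd_pow2_mult_diff:
  assumes "odd c" and "int c dvd 2 ^ m * (y - x)"
    and "0 \<le> x" "x < int c" "0 \<le> y" "y < int c"
  shows "x = y"
proof -
  have "coprime (int c) (2 ^ m)"
    using assms(1) by simp
  then have "int c dvd y - x"
    using assms(2) by (simp add: coprime_dvd_mult_right_iff)
  then show ?thesis
    using assms(3-6) by (smt (verit) dvd_imp_le_int)
qed

context
  fixes c :: nat
  assumes c: "odd c"
begin

lemma odd_dihedral_involution:
  assumes "x \<in> carrier (dihedral_model c)" and "x \<otimes>\<^bsub>dihedral_model c\<^esub> x = (False, 0)"
  shows "x = (False, 0) \<or> fst x"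
proof (cases x)
  case (Pair e i)
  moreover have "\<not> e \<Longrightarrow> int c dvd 2 ^ 1 * (i - 0)"
    using assms Pair by (auto simp: mod_eq_0_iff_dvd)
  ultimately show ?thesis
    using assms eq_if_odd_dvd_pow2_mult_diff[OF c, of 1 i 0] by auto
qed

lemma odd_dihedral_reflections_commute:
  assumes "x \<in> carrier (dihedral_model c)" "y \<in> carrier (dihedral_model c)" "fst x" "fst y"
    and "x \<otimes>\<^bsub>dihedral_model c\<^esub> y = y \<otimes>\<^bsub>dihedral_model c\<^esub> x"
  shows "x = y"
proof -
  obtain u v where xy: "x = (True, u)" "y = (True, v)"
    using assms(3,4) by (cases x, cases y) auto
  then have "(- u + v) mod int c = (- v + u) mod int c"
    using assms(5) by simp
  then have dvd: "int c dvd 2 ^ 1 * (v - u)"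
    by (simp add: mod_eq_dvd_iff algebra_simps)
  have "u = v"
    by (rule eq_if_odd_dvd_pow2_mult_diff[OF c dvd]) (use assms(1,2) xy in auto)
  then show ?thesis
    using xy by simp
qed

lemma odd_dihedral_iter_commutator_reflections:
  assumes "x \<in> carrier (dihedral_model c)" "y \<in> carrier (dihedral_model c)" "fst x" "fst y"
    and "iter_commutator (dihedral_model c) x y (Suc l) = (False, 0)"
  shows "x = y"
proof -
  obtain u v where xy: "x = (True, u)" "y = (True, v)"
    using assms(3,4) by (cases x, cases y) auto
  have "c > 0"
    using c by (auto intro: odd_pos)
  then have dvd: "int c dvd 2 ^ Suc l * (v - u)"
    using assms xy
    by (simp add: dihedral_model_iter_commutator_reflections mod_eq_0_iff_dvd del: iter_commutator.simps)
  have "u = v"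
    by (rule eq_if_odd_dvd_pow2_mult_diff[OF c dvd]) (use assms(1,2) xy in auto)
  then show ?thesis
    using xy by simp
qed

end

section \<open>The presented dihedral group is the concrete one\<close>

definition dihedral_rels :: "nat \<Rightarrow> dgen word set" where
  "dihedral_rels N = {[(Sg, False), (Sg, False)], replicate N (Tg, False),
      [(Sg, False), (Tg, False), (Sg, False), (Tg, False)]}"

lemma dihedral_pres_eq: "dihedral_pres N = presented_group {Sg, Tg} (dihedral_rels N)"
  by (simp add: dihedral_pres_def dihedral_rels_def)

lemma dS_eq: "dS N = wclass {Sg, Tg} (dihedral_rels N) [(Sg, False)]"
  by (simp add: dS_def dihedral_rels_def)

lemma dT_eq: "dT N = wclass {Sg, Tg} (dihedral_rels N) [(Tg, False)]"
  by (simp add: dT_def dihedral_rels_def)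

lemma words_dgen [simp]: "w \<in> words {Sg, Tg}"
proof -
  have "{Sg, Tg} = UNIV"
    using dgen.exhaust by blast
  then show ?thesis
    by simp
qed

lemma group_dihedral_pres: "group (dihedral_pres N)"
  by (simp add: dihedral_pres_eq group_presented_group)

definition dihedral_model_gen :: "dgen \<Rightarrow> bool \<times> int" where
  "dihedral_model_gen x = (case x of Sg \<Rightarrow> (True, 0) | Tg \<Rightarrow> (False, 1))"

definition dihedral_to_model :: "nat \<Rightarrow> dgen word set \<Rightarrow> bool \<times> int" where
  "dihedral_to_model N = presented_lift (dihedral_model N) dihedral_model_gen"

definition dihedral_of_model :: "nat \<Rightarrow> bool \<times> int \<Rightarrow> dgen word set" where
  "dihedral_of_model N p =
     (if fst p then dS N else \<one>\<^bsub>dihedral_pres N\<^esub>) \<otimes>\<^bsub>dihedral_pres N\<^esub> dT N [^]\<^bsub>dihedral_pres N\<^esub> snd p"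

context
  fixes N :: nat
  assumes N: "N \<ge> 2"
begin

interpretation M: group "dihedral_model N"
  using N by (intro group_dihedral_model) simp

interpretation P: group "dihedral_pres N"
  by (rule group_dihedral_pres)

lemma dihedral_model_gen_carrier: "dihedral_model_gen ` {Sg, Tg} \<subseteq> carrier (dihedral_model N)"
  using N by (auto simp: dihedral_model_gen_def)

lemma dihedral_model_gen_rels:
  "\<forall>r\<in>dihedral_rels N. r \<in> words {Sg, Tg} \<longrightarrow>
     eval_word (dihedral_model N) dihedral_model_gen r = \<one>\<^bsub>dihedral_model N\<^esub>"
proof -
  have "eval_word (dihedral_model N) dihedral_model_gen (replicate N (Tg, False)) = (False, int N mod int N)"
    using N by (simp add: M.eval_word_replicate dihedral_model_gen_def dihedral_model_rotation_pow)
  moreover have "1 mod int N = 1"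
    using N by simp
  ultimately show ?thesis
    by (auto simp: dihedral_rels_def dihedral_model_gen_def)
qed

lemma dihedral_to_model_hom: "dihedral_to_model N \<in> hom (dihedral_pres N) (dihedral_model N)"
  unfolding dihedral_to_model_def dihedral_pres_eq
  using dihedral_model_gen_carrier dihedral_model_gen_rels by (rule M.presented_lift_hom)

lemma dihedral_to_model_wclass:
  "dihedral_to_model N (wclass {Sg, Tg} (dihedral_rels N) w) = eval_word (dihedral_model N) dihedral_model_gen w"
  unfolding dihedral_to_model_def
  using dihedral_model_gen_carrier dihedral_model_gen_rels by (rule M.presented_lift_wclass) simp

lemma dihedral_to_model_dS: "dihedral_to_model N (dS N) = (True, 0)"
  by (simp add: dS_eq dihedral_to_model_wclass dihedral_model_gen_def)

lemma dihedral_to_model_dT: "dihedral_to_model N (dT N) = (False, 1)"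
  using N by (simp add: dT_eq dihedral_to_model_wclass dihedral_model_gen_def)

lemma dS_carrier: "dS N \<in> carrier (dihedral_pres N)"
  by (simp add: dS_eq dihedral_pres_eq)

lemma dT_carrier: "dT N \<in> carrier (dihedral_pres N)"
  by (simp add: dT_eq dihedral_pres_eq)

lemma dS_dS: "dS N \<otimes>\<^bsub>dihedral_pres N\<^esub> dS N = \<one>\<^bsub>dihedral_pres N\<^esub>"
  unfolding dS_eq dihedral_pres_eq
  by (simp add: presented_group_mult presented_group_relator dihedral_rels_def)

lemma dT_dS: "dT N \<otimes>\<^bsub>dihedral_pres N\<^esub> dS N = dS N \<otimes>\<^bsub>dihedral_pres N\<^esub> inv\<^bsub>dihedral_pres N\<^esub> dT N"
proof -
  have "dS N \<otimes>\<^bsub>dihedral_pres N\<^esub> dT N \<otimes>\<^bsub>dihedral_pres N\<^esub> dS N \<otimes>\<^bsub>dihedral_pres N\<^esub> dT N =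
      \<one>\<^bsub>dihedral_pres N\<^esub>"
    unfolding dS_eq dT_eq dihedral_pres_eq
    by (simp add: presented_group_mult presented_group_relator dihedral_rels_def)
  then have "dS N \<otimes>\<^bsub>dihedral_pres N\<^esub> (dT N \<otimes>\<^bsub>dihedral_pres N\<^esub> dS N \<otimes>\<^bsub>dihedral_pres N\<^esub> dT N) =
      dS N \<otimes>\<^bsub>dihedral_pres N\<^esub> dS N"
    using dS_dS dS_carrier dT_carrier by (simp add: P.m_assoc)
  then have "dT N \<otimes>\<^bsub>dihedral_pres N\<^esub> dS N \<otimes>\<^bsub>dihedral_pres N\<^esub> dT N = dS N"
    using dS_carrier dT_carrier by simp
  then show ?thesis
    using dS_carrier dT_carrier P.inv_solve_right'[of "dT N \<otimes>\<^bsub>dihedral_pres N\<^esub> dS N" "dS N" "dT N"]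
    by simp
qed

lemma dT_int_pow_mod: "dT N [^]\<^bsub>dihedral_pres N\<^esub> (i mod int N) = dT N [^]\<^bsub>dihedral_pres N\<^esub> i"
proof -
  have "dT N [^]\<^bsub>dihedral_pres N\<^esub> int N = \<one>\<^bsub>dihedral_pres N\<^esub>"
    unfolding int_pow_int dT_eq dihedral_pres_eq
    by (simp add: presented_group_pow_letter presented_group_relator dihedral_rels_def)
  then have "dT N [^]\<^bsub>dihedral_pres N\<^esub> (int N * (i div int N)) = \<one>\<^bsub>dihedral_pres N\<^esub>"
    using dT_carrier by (simp add: P.int_pow_pow[symmetric])
  then show ?thesis
    using dT_carrier P.int_pow_mult[of "dT N" "int N * (i div int N)" "i mod int N"] by simp
qed

lemma dihedral_of_model_carrier: "dihedral_of_model N p \<in> carrier (dihedral_pres N)"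
  using dS_carrier dT_carrier by (simp add: dihedral_of_model_def)

lemma dihedral_of_model_dS_mult:
  assumes "p \<in> carrier (dihedral_model N)"
  shows "dihedral_of_model N ((True, 0) \<otimes>\<^bsub>dihedral_model N\<^esub> p) =
    dS N \<otimes>\<^bsub>dihedral_pres N\<^esub> dihedral_of_model N p"
  using assms dS_carrier dT_carrier dS_dS
  by (cases p) (auto simp: dihedral_of_model_def P.m_assoc[symmetric])

lemma dihedral_of_model_dT_mult:
  assumes "p \<in> carrier (dihedral_model N)"
  shows "dihedral_of_model N ((False, 1) \<otimes>\<^bsub>dihedral_model N\<^esub> p) =
    dT N \<otimes>\<^bsub>dihedral_pres N\<^esub> dihedral_of_model N p"
proof -
  obtain e i where p: "p = (e, i)"
    by force
  have "dihedral_of_model N ((False, 1) \<otimes>\<^bsub>dihedral_model N\<^esub> p) =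
      (if e then dS N else \<one>\<^bsub>dihedral_pres N\<^esub>) \<otimes>\<^bsub>dihedral_pres N\<^esub>
        (dT N [^]\<^bsub>dihedral_pres N\<^esub> (if e then - 1 else 1 :: int) \<otimes>\<^bsub>dihedral_pres N\<^esub>
         dT N [^]\<^bsub>dihedral_pres N\<^esub> i)"
    using p dT_carrier by (simp add: dihedral_of_model_def dT_int_pow_mod P.int_pow_mult[symmetric])
  also have "\<dots> = dT N \<otimes>\<^bsub>dihedral_pres N\<^esub> dihedral_of_model N p"
    using p dS_carrier dT_carrier dT_dS
    by (cases e) (simp_all add: dihedral_of_model_def P.int_pow_neg P.m_assoc[symmetric])
  finally show ?thesis .
qed

lemma dihedral_of_to_model:
  "x \<in> carrier (dihedral_pres N) \<Longrightarrow> dihedral_of_model N (dihedral_to_model N x) = x"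
  unfolding dihedral_to_model_def
proof (rule M.presented_lift_left_inverse[where X = "{Sg, Tg}" and R = "dihedral_rels N",
      folded dihedral_pres_eq])
  fix g q
  assume "g \<in> {Sg, Tg}" and "q \<in> carrier (dihedral_model N)"
  then show "dihedral_of_model N (dihedral_model_gen g \<otimes>\<^bsub>dihedral_model N\<^esub> q) =
      wclass {Sg, Tg} (dihedral_rels N) [(g, False)] \<otimes>\<^bsub>dihedral_pres N\<^esub> dihedral_of_model N q"
    using dihedral_of_model_dS_mult dihedral_of_model_dT_mult
    by (cases g) (simp_all add: dihedral_model_gen_def flip: dS_eq dT_eq)
qed (use dihedral_model_gen_carrier dihedral_model_gen_rels dihedral_of_model_carrier dT_carrier in
  \<open>simp_all add: dihedral_of_model_def\<close>)

lemma dihedral_to_of_model: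
  assumes "p \<in> carrier (dihedral_model N)"
  shows "dihedral_to_model N (dihedral_of_model N p) = p"
proof -
  interpret h: group_hom "dihedral_pres N" "dihedral_model N" "dihedral_to_model N"
    using dihedral_to_model_hom by unfold_locales
  obtain e i where p: "p = (e, i)"
    by force
  have "dihedral_to_model N (dT N [^]\<^bsub>dihedral_pres N\<^esub> i) = (False, i)"
    using assms p N dT_carrier by (simp add: h.hom_int_pow dihedral_to_model_dT dihedral_model_rotation_int_pow)
  then show ?thesis
    using assms p dS_carrier dT_carrier
    by (cases e) (simp_all add: dihedral_of_model_def dihedral_to_model_dS)
qed

lemma dihedral_of_model_hom: "dihedral_of_model N \<in> hom (dihedral_model N) (dihedral_pres N)"
proof (rule homI)
  fix p q
  assume p: "p \<in> carrier (dihedral_model N)" and q: "q \<in> carrier (dihedral_model N)"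
  have "p \<otimes>\<^bsub>dihedral_model N\<^esub> q =
      dihedral_to_model N (dihedral_of_model N p \<otimes>\<^bsub>dihedral_pres N\<^esub> dihedral_of_model N q)"
    using hom_mult[OF dihedral_to_model_hom dihedral_of_model_carrier dihedral_of_model_carrier]
      dihedral_to_of_model p q by simp
  then show "dihedral_of_model N (p \<otimes>\<^bsub>dihedral_model N\<^esub> q) =
      dihedral_of_model N p \<otimes>\<^bsub>dihedral_pres N\<^esub> dihedral_of_model N q"
    using dihedral_of_to_model dihedral_of_model_carrier by simp
qed (rule dihedral_of_model_carrier)

lemma dihedral_of_model_dS: "dihedral_of_model N (True, 0) = dS N"
  using dihedral_of_to_model[OF dS_carrier] dihedral_to_model_dS by simp

lemma dihedral_of_model_dT: "dihedral_of_model N (False, 1) = dT N"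
  using dihedral_of_to_model[OF dT_carrier] dihedral_to_model_dT by simp

lemma dihedral_to_model_image:
  "dihedral_to_model N ` carrier (dihedral_pres N) = carrier (dihedral_model N)"
proof
  show "dihedral_to_model N ` carrier (dihedral_pres N) \<subseteq> carrier (dihedral_model N)"
    using hom_in_carrier[OF dihedral_to_model_hom] by blast
  show "carrier (dihedral_model N) \<subseteq> dihedral_to_model N ` carrier (dihedral_pres N)"
  proof
    fix p
    assume "p \<in> carrier (dihedral_model N)"
    then have "p = dihedral_to_model N (dihedral_of_model N p)"
      by (simp add: dihedral_to_of_model)
    then show "p \<in> dihedral_to_model N ` carrier (dihedral_pres N)"
      using dihedral_of_model_carrier by (rule image_eqI)
  qed
qed

lemma dihedral_of_model_image:
  "dihedral_of_model N ` carrier (dihedral_model N) = carrier (dihedral_pres N)"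
proof
  show "dihedral_of_model N ` carrier (dihedral_model N) \<subseteq> carrier (dihedral_pres N)"
    using dihedral_of_model_carrier by blast
  show "carrier (dihedral_pres N) \<subseteq> dihedral_of_model N ` carrier (dihedral_model N)"
  proof
    fix x
    assume x: "x \<in> carrier (dihedral_pres N)"
    then have "x = dihedral_of_model N (dihedral_to_model N x)"
      by (simp add: dihedral_of_to_model)
    then show "x \<in> dihedral_of_model N ` carrier (dihedral_model N)"
      using hom_in_carrier[OF dihedral_to_model_hom x] by (rule image_eqI)
  qed
qed

end

lemma ex_surj_hom_dihedral_pres_iff:
  assumes "N \<ge> 2"
  shows "(\<exists>f. f \<in> hom G (dihedral_pres N) \<and> f ` carrier G = carrier (dihedral_pres N)) \<longleftrightarrow>
    (\<exists>f. f \<in> hom G (dihedral_model N) \<and> f ` carrier G = carrier (dihedral_model N))"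
proof
  assume "\<exists>f. f \<in> hom G (dihedral_pres N) \<and> f ` carrier G = carrier (dihedral_pres N)"
  then obtain f where "f \<in> hom G (dihedral_pres N)" "f ` carrier G = carrier (dihedral_pres N)"
    by blast
  from surj_hom_compose[OF this dihedral_to_model_hom[OF assms] dihedral_to_model_image[OF assms]]
  show "\<exists>f. f \<in> hom G (dihedral_model N) \<and> f ` carrier G = carrier (dihedral_model N)"
    by blast
next
  assume "\<exists>f. f \<in> hom G (dihedral_model N) \<and> f ` carrier G = carrier (dihedral_model N)"
  then obtain f where "f \<in> hom G (dihedral_model N)" "f ` carrier G = carrier (dihedral_model N)"
    by blast
  from surj_hom_compose[OF this dihedral_of_model_hom[OF assms] dihedral_of_model_image[OF assms]]
  show "\<exists>f. f \<in> hom G (dihedral_pres N) \<and> f ` carrier G = carrier (dihedral_pres N)"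
    by blast
qed

lemma eval_eq_Nil [simp]: "eval_eq G s t h [] = \<one>\<^bsub>G\<^esub>"
  by (simp add: eval_eq_def)

lemma eval_eq_Cons [simp]: "eval_eq G s t h (l # u) = eval_ulet G s t h l \<otimes>\<^bsub>G\<^esub> eval_eq G s t h u"
  by (simp add: eval_eq_def)

lemma subst_eq_Nil [simp]: "subst_eq n [] = []"
  by (simp add: subst_eq_def)

lemma subst_eq_Cons [simp]: "subst_eq n (l # u) = subst_let n l @ subst_eq n u"
  by (simp add: subst_eq_def)

context group
begin

lemma eval_ulet_closed:
  "s \<in> carrier G \<Longrightarrow> t \<in> carrier G \<Longrightarrow> (\<forall>j\<in>ulet_vars l. h j \<in> carrier G) \<Longrightarrow>
   eval_ulet G s t h l \<in> carrier G"
  by (cases l) (auto simp: eval_ulet_def ulet_vars_def)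

lemma eval_eq_closed:
  "s \<in> carrier G \<Longrightarrow> t \<in> carrier G \<Longrightarrow> (\<forall>l\<in>set u. \<forall>j\<in>ulet_vars l. h j \<in> carrier G) \<Longrightarrow>
   eval_eq G s t h u \<in> carrier G"
  by (induction u) (auto simp: eval_ulet_closed)

end

definition is_solution ::
  "('g, 'b) monoid_scheme \<Rightarrow> 'g \<Rightarrow> 'g \<Rightarrow> nat \<Rightarrow> ulet list list \<Rightarrow> (nat \<Rightarrow> 'g) \<Rightarrow> bool" where
  "is_solution G s t k us h \<longleftrightarrow>
     (\<forall>j\<in>{1..k}. h j \<in> carrier G) \<and> (\<forall>u\<in>set us. eval_eq G s t h u = \<one>\<^bsub>G\<^esub>)"

lemma has_solution_Dn_def':
  "has_solution_Dn n k us \<longleftrightarrow>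
   (\<exists>h. is_solution (dihedral_pres (n div 2)) (dS (n div 2)) (dT (n div 2)) k us h)"
  by (simp add: has_solution_Dn_def is_solution_def)

lemma (in group_hom) hom_eval_eq:
  assumes "s \<in> carrier G" and "t \<in> carrier G" and "\<forall>l\<in>set u. \<forall>j\<in>ulet_vars l. x j \<in> carrier G"
  shows "h (eval_eq G s t x u) = eval_eq H (h s) (h t) (\<lambda>j. h (x j)) u"
  using assms(3)
proof (induction u)
  case (Cons l u)
  then have "\<forall>j\<in>ulet_vars l. x j \<in> carrier G"
    by simp
  then have "h (eval_ulet G s t x l) = eval_ulet H (h s) (h t) (\<lambda>j. h (x j)) l"
    using assms(1,2) by (cases l) (auto simp: eval_ulet_def ulet_vars_def)
  with Cons show ?case
    using assms(1,2) by (simp add: G.eval_ulet_closed G.eval_eq_closed)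
qed simp

lemma (in group_hom) is_solution_image:
  assumes "is_solution G s t k us x" and "s \<in> carrier G" and "t \<in> carrier G"
    and vars: "\<forall>u\<in>set us. \<forall>l\<in>set u. ulet_vars l \<subseteq> {1..k}"
  shows "is_solution H (h s) (h t) k us (\<lambda>j. h (x j))"
proof -
  have "\<forall>l\<in>set u. \<forall>j\<in>ulet_vars l. x j \<in> carrier G" if "u \<in> set us" for u
    using assms(1) vars that by (auto simp: is_solution_def)
  then show ?thesis
    using assms(1-3) by (auto simp: is_solution_def hom_eval_eq[symmetric])
qed

lemma has_solution_Dn_iff_model:
  assumes N: "n div 2 \<ge> 2" and vars: "\<forall>u\<in>set us. \<forall>l\<in>set u. ulet_vars l \<subseteq> {1..k}"
  shows "has_solution_Dn n k us \<longleftrightarrow> (\<exists>h. is_solution (dihedral_model (n div 2)) (True, 0) (False, 1) k us h)"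
proof -
  let ?N = "n div 2"
  have "group (dihedral_model ?N)"
    using N by (intro group_dihedral_model) simp
  then interpret to: group_hom "dihedral_pres ?N" "dihedral_model ?N" "dihedral_to_model ?N"
    using group_dihedral_pres dihedral_to_model_hom[OF N] by (simp add: group_hom_def group_hom_axioms_def)
  interpret of: group_hom "dihedral_model ?N" "dihedral_pres ?N" "dihedral_of_model ?N"
    using to.G.is_group to.H.is_group dihedral_of_model_hom[OF N]
    by (simp add: group_hom_def group_hom_axioms_def)
  show ?thesis
  proof
    assume "has_solution_Dn n k us"
    then obtain x where "is_solution (dihedral_pres ?N) (dS ?N) (dT ?N) k us x"
      unfolding has_solution_Dn_def' by blast
    from to.is_solution_image[OF this dS_carrier[OF N] dT_carrier[OF N] vars]
    show "\<exists>h. is_solution (dihedral_model ?N) (True, 0) (False, 1) k us h"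
      unfolding dihedral_to_model_dS[OF N] dihedral_to_model_dT[OF N] by blast
  next
    assume "\<exists>h. is_solution (dihedral_model ?N) (True, 0) (False, 1) k us h"
    then obtain h where h: "is_solution (dihedral_model ?N) (True, 0) (False, 1) k us h"
      by blast
    have "(True, 0) \<in> carrier (dihedral_model ?N)" "(False, 1) \<in> carrier (dihedral_model ?N)"
      using N by simp_all
    from of.is_solution_image[OF h this vars]
    show "has_solution_Dn n k us"
      unfolding has_solution_Dn_def' dihedral_of_model_dS[OF N] dihedral_of_model_dT[OF N] by blast
  qed
qed

lemma GA_in_G4c_gens [simp]: "GA \<in> G4c_gens n k"
  and GD_in_G4c_gens [simp]: "GD \<in> G4c_gens n k"
  and Ggens_subset_G4c_gens: "Ggens n k \<subseteq> G4c_gens n k"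
  by (auto simp: G4c_gens_def)

lemma G4c_gens_eq: "G4c_gens n k = insert GA (insert GD (Ggens n k))"
  by (simp add: G4c_gens_def)

lemma Xword_words: "j \<in> {1..k} \<Longrightarrow> Xword n j \<in> words (G4c_gens n k)"
  unfolding Xword_def by (auto simp: gletter_def Ggens_def G4c_gens_def intro!: words_concat)

lemma subst_eq_words:
  "\<forall>l\<in>set u. ulet_vars l \<subseteq> {1..k} \<Longrightarrow> subst_eq n u \<in> words (G4c_gens n k)"
proof (induction u)
  case (Cons l u)
  then have "subst_let n l \<in> words (G4c_gens n k)"
    using Xword_words by (cases l) (auto simp: subst_let_def gletter_def ulet_vars_def)
  with Cons show ?case
    by simp
qed simp

text \<open>The relators of \<open>G\<^sub>4\<^sub>c\<close> other than \<open>d\<^sup>n\<close> and the \<open>w\<^sub>i\<close>, evaluated at \<open>a\<close>, \<open>d\<close> and the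
  set \<open>Gs\<close> of values of the \<open>g\<^sub>i\<^sub>,\<^sub>j\<close>.\<close>

definition G4c_base_relations :: "('g, 'b) monoid_scheme \<Rightarrow> nat \<Rightarrow> nat \<Rightarrow> 'g \<Rightarrow> 'g \<Rightarrow> 'g set \<Rightarrow> bool" where
  "G4c_base_relations G b c a d Gs \<longleftrightarrow>
     a \<otimes>\<^bsub>G\<^esub> a = \<one>\<^bsub>G\<^esub> \<and> a \<otimes>\<^bsub>G\<^esub> d \<otimes>\<^bsub>G\<^esub> a \<otimes>\<^bsub>G\<^esub> d = \<one>\<^bsub>G\<^esub> \<and>
     (\<forall>g\<in>Gs. g \<otimes>\<^bsub>G\<^esub> g = \<one>\<^bsub>G\<^esub> \<and> g \<otimes>\<^bsub>G\<^esub> a = a \<otimes>\<^bsub>G\<^esub> g \<and>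
       iter_commutator G (d [^]\<^bsub>G\<^esub> c) g b = \<one>\<^bsub>G\<^esub>) \<and>
     (\<forall>g\<in>Gs. \<forall>g'\<in>Gs. g \<otimes>\<^bsub>G\<^esub> g' = g' \<otimes>\<^bsub>G\<^esub> g)"

lemma G4c_rels_words:
  assumes "\<forall>u\<in>set us. \<forall>l\<in>set u. ulet_vars l \<subseteq> {1..k}"
  shows "G4c_rels n b c k us \<subseteq> words (G4c_gens n k)"
proof -
  have "gletter x \<in> words (G4c_gens n k)" if "x \<in> G4c_gens n k" for x
    using that by (simp add: gletter_def)
  moreover have "g \<in> G4c_gens n k" if "g \<in> Ggens n k" for g
    using that Ggens_subset_G4c_gens by blast
  ultimately show ?thesis
    using assms subst_eq_words words_itcomm[of _ "G4c_gens n k"]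
    by (auto simp: G4c_rels_def wcomm_def)
qed

lemma (in group) G4c_rels_eval_iff:
  assumes \<rho>: "\<rho> ` G4c_gens n k \<subseteq> carrier G" and vars: "\<forall>u\<in>set us. \<forall>l\<in>set u. ulet_vars l \<subseteq> {1..k}"
  shows "(\<forall>r\<in>G4c_rels n b c k us. r \<in> words (G4c_gens n k) \<longrightarrow> eval_word G \<rho> r = \<one>) \<longleftrightarrow>
    G4c_base_relations G b c (\<rho> GA) (\<rho> GD) (\<rho> ` Ggens n k) \<and> \<rho> GD [^] n = \<one> \<and>
    (\<forall>u\<in>set us. eval_word G \<rho> (subst_eq n u) = \<one>)"
    (is "_ \<longleftrightarrow> ?rhs")
proof -
  have gen: "x \<in> G4c_gens n k \<Longrightarrow> \<rho> x \<in> carrier G" for x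
    using \<rho> by auto
  have G: "g \<in> Ggens n k \<Longrightarrow> g \<in> G4c_gens n k" for g
    using Ggens_subset_G4c_gens by blast
  have letter: "x \<in> G4c_gens n k \<Longrightarrow> gletter x \<in> words (G4c_gens n k)" for x
    by (simp add: gletter_def)
  have eval_letter: "x \<in> G4c_gens n k \<Longrightarrow> eval_word G \<rho> (gletter x) = \<rho> x" for x
    using gen by (simp add: eval_word_gletter)
  have eval_pair: "x \<in> G4c_gens n k \<Longrightarrow> y \<in> G4c_gens n k \<Longrightarrow>
      eval_word G \<rho> (gletter x @ gletter y) = \<rho> x \<otimes> \<rho> y" for x y
    using gen by (simp add: gletter_def)
  have eval_comm: "x \<in> G4c_gens n k \<Longrightarrow> y \<in> G4c_gens n k \<Longrightarrow>
      eval_word G \<rho> (wcomm (gletter x) (gletter y)) = \<one> \<longleftrightarrow> \<rho> x \<otimes> \<rho> y = \<rho> y \<otimes> \<rho> x" for x y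
    using \<rho> letter eval_letter gen by (simp add: eval_word_wcomm commutator_eq_one_iff)
  have eval_itcomm: "g \<in> Ggens n k \<Longrightarrow> eval_word G \<rho> (itcomm (replicate c (GD, False)) (gletter g) b) =
      iter_commutator G (\<rho> GD [^] c) (\<rho> g) b" for g
    using \<rho> letter G eval_letter gen by (simp add: eval_word_itcomm eval_word_replicate)
  have eval_adad: "eval_word G \<rho> (gletter GA @ gletter GD @ gletter GA @ gletter GD) =
      \<rho> GA \<otimes> \<rho> GD \<otimes> \<rho> GA \<otimes> \<rho> GD"
    using gen by (simp add: gletter_def m_assoc)
  have "(\<forall>r\<in>G4c_rels n b c k us. r \<in> words (G4c_gens n k) \<longrightarrow> eval_word G \<rho> r = \<one>) \<longleftrightarrow>
      (\<forall>r\<in>G4c_rels n b c k us. eval_word G \<rho> r = \<one>)"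
    using G4c_rels_words[OF vars] by blast
  also have "\<dots> \<longleftrightarrow>
      eval_word G \<rho> (gletter GA @ gletter GA) = \<one> \<and> eval_word G \<rho> (replicate n (GD, False)) = \<one> \<and>
      eval_word G \<rho> (gletter GA @ gletter GD @ gletter GA @ gletter GD) = \<one> \<and>
      (\<forall>g\<in>Ggens n k. \<forall>g'\<in>Ggens n k. eval_word G \<rho> (wcomm (gletter g) (gletter g')) = \<one>) \<and>
      (\<forall>g\<in>Ggens n k. eval_word G \<rho> (wcomm (gletter g) (gletter GA)) = \<one>) \<and>
      (\<forall>g\<in>Ggens n k. eval_word G \<rho> (gletter g @ gletter g) = \<one>) \<and>
      (\<forall>g\<in>Ggens n k. eval_word G \<rho> (itcomm (replicate c (GD, False)) (gletter g) b) = \<one>) \<and>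
      (\<forall>u\<in>set us. eval_word G \<rho> (subst_eq n u) = \<one>)"
    unfolding G4c_rels_def by blast
  also have "\<dots> \<longleftrightarrow> ?rhs"
    using G eval_pair eval_comm eval_itcomm eval_adad
    by (auto simp: G4c_base_relations_def eval_word_replicate gen)
  finally show ?thesis .
qed

lemma (in group_hom) G4c_base_relations_image:
  assumes "a \<in> carrier G" and "d \<in> carrier G" and "Gs \<subseteq> carrier G"
    and "G4c_base_relations G b c a d Gs"
  shows "G4c_base_relations H b c (h a) (h d) (h ` Gs)"
proof -
  have "h (a \<otimes> a) = \<one>\<^bsub>H\<^esub> \<and> h (a \<otimes> d \<otimes> a \<otimes> d) = \<one>\<^bsub>H\<^esub> \<and>
      (\<forall>g\<in>Gs. h (g \<otimes> g) = \<one>\<^bsub>H\<^esub> \<and> h (g \<otimes> a) = h (a \<otimes> g) \<and>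
        h (iter_commutator G (d [^] c) g b) = \<one>\<^bsub>H\<^esub>) \<and>
      (\<forall>g\<in>Gs. \<forall>g'\<in>Gs. h (g \<otimes> g') = h (g' \<otimes> g))"
    using assms(4) by (simp add: G4c_base_relations_def)
  then show ?thesis
    using assms(1-3)
    by (simp add: G4c_base_relations_def hom_nat_pow hom_iter_commutator subset_iff)
qed

context group
begin

lemma eval_word_concat_int_pow:
  fixes \<sigma> :: "'i \<Rightarrow> int"
  assumes \<phi>: "\<phi> ` X \<subseteq> carrier G" and d: "d \<in> carrier G"
    and blocks: "\<And>i. i \<in> set is \<Longrightarrow> B i \<in> words X \<and> eval_word G \<phi> (B i) = d [^] \<sigma> i"
  shows "eval_word G \<phi> (concat (map B is)) = d [^] (\<Sum>i\<leftarrow>is. \<sigma> i)"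
  using blocks
proof (induction "is")
  case (Cons i "is")
  then have "concat (map B is) \<in> words X"
    by (intro words_concat) auto
  with Cons \<phi> d show ?case
    by (simp add: eval_word_append int_pow_mult)
qed simp

lemma eval_word_Xword:
  fixes \<sigma> :: "nat \<Rightarrow> int"
  assumes \<rho>: "\<rho> ` G4c_gens n k \<subseteq> carrier G" and j: "j \<in> {1..k}"
    and conj: "\<And>i. i \<in> {1..n div 2} \<Longrightarrow> \<rho> (GG i j) \<otimes> \<rho> GD \<otimes> inv (\<rho> (GG i j)) = \<rho> GD [^] \<sigma> i"
  shows "eval_word G \<rho> (Xword n j) = \<rho> (GG 0 j) \<otimes> \<rho> GD [^] (\<Sum>i = 1..n div 2. \<sigma> i)"
proof -
  define B where "B i = gletter (GG i j) @ gletter GD @ winv (gletter (GG i j))" for i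
  have gens: "GG i j \<in> G4c_gens n k" if "i \<le> n div 2" for i
    using j that by (simp add: G4c_gens_def Ggens_def)
  have carrier: "\<rho> (GG i j) \<in> carrier G" "\<rho> GD \<in> carrier G" if "i \<le> n div 2" for i
    using \<rho> gens[OF that] by auto
  have "B i \<in> words (G4c_gens n k) \<and> eval_word G \<rho> (B i) = \<rho> GD [^] \<sigma> i"
    if "i \<in> set [1..<n div 2 + 1]" for i
    using that gens[of i] carrier[of i] conj[of i]
    by (auto simp: B_def gletter_def m_assoc)
  then have "eval_word G \<rho> (concat (map B [1..<n div 2 + 1])) = \<rho> GD [^] (\<Sum>i\<leftarrow>[1..<n div 2 + 1]. \<sigma> i)"
    using \<rho> carrier[of 0] by (intro eval_word_concat_int_pow) auto
  also have "(\<Sum>i\<leftarrow>[1..<n div 2 + 1]. \<sigma> i) = sum \<sigma> (set [1..<n div 2 + 1])"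
    by (rule sum_set_upt_conv_sum_list_nat[symmetric])
  also have "set [1..<n div 2 + 1] = {1..n div 2}"
    by auto
  finally have "eval_word G \<rho> (concat (map B [1..<n div 2 + 1])) = \<rho> GD [^] (\<Sum>i = 1..n div 2. \<sigma> i)" .
  moreover have "Xword n j = gletter (GG 0 j) @ concat (map B [1..<n div 2 + 1])"
    by (simp add: Xword_def B_def[abs_def] del: upt_Suc)
  ultimately show ?thesis
    using \<rho> gens[of 0] Xword_words[OF j, of n]
    by (simp add: eval_word_append eval_word_gletter gletter_def)
qed

end

context group_hom
begin

lemma eval_word_subst_let:
  assumes \<rho>: "\<rho> ` G4c_gens n k \<subseteq> carrier H" and t: "t \<in> carrier G"
    and sA: "h s = \<rho> GA" and tD: "h t = \<rho> GD \<otimes>\<^bsub>H\<^esub> \<rho> GD"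
    and x: "\<And>j. j \<in> {1..k} \<Longrightarrow> x j \<in> carrier G \<and> h (x j) = eval_word H \<rho> (Xword n j)"
    and var: "ulet_vars l \<subseteq> {1..k}"
  shows "eval_word H \<rho> (subst_let n l) = h (eval_ulet G s t x l)"
proof -
  have AD: "\<rho> GA \<in> carrier H" "\<rho> GD \<in> carrier H"
    using \<rho> by auto
  show ?thesis
  proof (cases l)
    case CTi
    then show ?thesis
      using tD AD t H.eval_word_winv[OF \<rho>, of "gletter GD @ gletter GD"]
      by (simp add: subst_let_def eval_ulet_def gletter_def)
  next
    case (XVi j)
    then have "j \<in> {1..k}"
      using var by (simp add: ulet_vars_def)
    then show ?thesis
      using XVi x H.eval_word_winv[OF \<rho> Xword_words] by (simp add: subst_let_def eval_ulet_def)
  qed (use sA tD AD x var in \<open>simp_all add: subst_let_def eval_ulet_def gletter_def ulet_vars_def\<close>)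
qed

lemma eval_word_subst_eq:
  assumes \<rho>: "\<rho> ` G4c_gens n k \<subseteq> carrier H" and s: "s \<in> carrier G" and t: "t \<in> carrier G"
    and sA: "h s = \<rho> GA" and tD: "h t = \<rho> GD \<otimes>\<^bsub>H\<^esub> \<rho> GD"
    and x: "\<And>j. j \<in> {1..k} \<Longrightarrow> x j \<in> carrier G \<and> h (x j) = eval_word H \<rho> (Xword n j)"
    and vars: "\<forall>l\<in>set u. ulet_vars l \<subseteq> {1..k}"
  shows "eval_word H \<rho> (subst_eq n u) = h (eval_eq G s t x u)"
  using vars
proof (induction u)
  case (Cons l u)
  have "\<forall>j\<in>ulet_vars l. x j \<in> carrier G" "\<forall>l\<in>set u. \<forall>j\<in>ulet_vars l. x j \<in> carrier G"
    using Cons x by fastforce+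
  moreover have "subst_let n l \<in> words (G4c_gens n k)" "subst_eq n u \<in> words (G4c_gens n k)"
    using Cons.prems subst_eq_words[of "[l]" k n] subst_eq_words[of u k n] by auto
  ultimately show ?case
    using Cons \<rho> s t eval_word_subst_let[OF \<rho> t sA tD x]
    by (simp add: H.eval_word_append G.eval_ulet_closed G.eval_eq_closed)
qed simp

end

section \<open>Images in the dihedral group of order \<open>2c\<close>\<close>

locale G4c_odd_dihedral_image =
  fixes b c :: nat and a d :: "bool \<times> int" and Gs :: "(bool \<times> int) set"
  assumes c: "odd c" "1 < c" and b: "1 \<le> b"
    and carrier: "a \<in> carrier (dihedral_model c)" "d \<in> carrier (dihedral_model c)"
      "Gs \<subseteq> carrier (dihedral_model c)"
    and rels: "G4c_base_relations (dihedral_model c) b c a d Gs"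
    and gen: "generate (dihedral_model c) (insert a (insert d Gs)) = carrier (dihedral_model c)"
begin

sublocale group "dihedral_model c"
  using c by (intro group_dihedral_model) simp

lemma a_square: "a \<otimes>\<^bsub>dihedral_model c\<^esub> a = (False, 0)"
  and ad_square: "a \<otimes>\<^bsub>dihedral_model c\<^esub> d \<otimes>\<^bsub>dihedral_model c\<^esub> a \<otimes>\<^bsub>dihedral_model c\<^esub> d = (False, 0)"
  and g_square: "g \<in> Gs \<Longrightarrow> g \<otimes>\<^bsub>dihedral_model c\<^esub> g = (False, 0)"
  and g_commutes_a: "g \<in> Gs \<Longrightarrow> g \<otimes>\<^bsub>dihedral_model c\<^esub> a = a \<otimes>\<^bsub>dihedral_model c\<^esub> g"
  and iter_commutator_d_power_g: "g \<in> Gs \<Longrightarrow> iter_commutator (dihedral_model c) (d [^]\<^bsub>dihedral_model c\<^esub> c) g b = (False, 0)"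
  and g_commutes_g': "g \<in> Gs \<Longrightarrow> g' \<in> Gs \<Longrightarrow> g \<otimes>\<^bsub>dihedral_model c\<^esub> g' = g' \<otimes>\<^bsub>dihedral_model c\<^esub> g"
  using rels unfolding G4c_base_relations_def dihedral_model_one by blast+

lemma involution_cases:
  assumes "x \<in> insert a Gs"
  shows "x = (False, 0) \<or> fst x"
proof -
  have "x \<in> carrier (dihedral_model c)"
    using assms carrier by blast
  moreover have "x \<otimes>\<^bsub>dihedral_model c\<^esub> x = (False, 0)"
    using assms a_square g_square by blast
  ultimately show ?thesis
    by (rule odd_dihedral_involution[OF c(1)])
qed

lemma rotation_d: "\<not> fst d"
proof
  assume "fst d"
  then obtain x where d: "d = (True, x)"
    by (cases d) auto
  have dd: "d \<otimes>\<^bsub>dihedral_model c\<^esub> d = (False, 0)"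
    using d carrier by simp
  have "a = (False, 0) \<or> a = d"
  proof (cases "fst a")
    case True
    have "a \<otimes>\<^bsub>dihedral_model c\<^esub> d = d \<otimes>\<^bsub>dihedral_model c\<^esub> a"
      by (rule involutions_commute) (use carrier a_square dd ad_square in simp_all)
    then show ?thesis
      using odd_dihedral_reflections_commute[OF c(1)] carrier True \<open>fst d\<close> by blast
  next
    case False
    then show ?thesis
      using involution_cases by blast
  qed
  moreover have "g = (False, 0) \<or> g = d" if g: "g \<in> Gs" for g
  proof (cases "fst g")
    case True
    obtain b' where b': "b = Suc b'"
      using b by (cases b) auto
    have "d [^]\<^bsub>dihedral_model c\<^esub> c = d"
      by (rule pow_odd_involution) (use carrier dd c in simp_all)
    then have "iter_commutator (dihedral_model c) d g (Suc b') = (False, 0)"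
      using iter_commutator_d_power_g[OF g] b' by simp
    then show ?thesis
      using odd_dihedral_iter_commutator_reflections[OF c(1)] carrier g True \<open>fst d\<close> by blast
  next
    case False
    then show ?thesis
      using involution_cases g by blast
  qed
  ultimately have "insert a (insert d Gs) \<subseteq> {(False, 0), d}"
    by blast
  also have "\<dots> \<subseteq> dihedral_residue_subgroup c (int c) x"
    using d carrier by (auto simp: dihedral_residue_subgroup_def)
  finally show False
    using dihedral_residue_subgroup_not_generate[OF c(2) _ dvd_refl] c(2) gen by simp
qed

lemma reflection_a: "fst a"
proof (rule ccontr)
  assume "\<not> fst a"
  then have a: "a = (False, 0)"
    using involution_cases by blast
  then have "d \<otimes>\<^bsub>dihedral_model c\<^esub> d = (False, 0)"
    using ad_square carrier by (simp only: dihedral_model_one[of c, symmetric] l_one r_one)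
  then have d: "d = (False, 0)"
    using odd_dihedral_involution[OF c(1)] carrier rotation_d by blast
  obtain y where Gs: "\<And>g. g \<in> Gs \<Longrightarrow> g = (False, 0) \<or> g = (True, y)"
  proof (cases "\<exists>g\<in>Gs. fst g")
    case True
    then obtain g0 y where g0: "g0 \<in> Gs" "g0 = (True, y)"
      by (metis prod.collapse)
    have "g = (False, 0) \<or> g = g0" if "g \<in> Gs" for g
      using involution_cases[of g] odd_dihedral_reflections_commute[OF c(1), of g g0] that g0 g_commutes_g' carrier
      by fastforce
    then show ?thesis
      using that g0 by blast
  next
    case False
    then show ?thesis
      using that[of 0] involution_cases by blast
  qed
  have "insert a (insert d Gs) \<subseteq> dihedral_residue_subgroup c (int c) y"
    using a d Gs carrier by (force simp: dihedral_residue_subgroup_def)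
  then show False
    using dihedral_residue_subgroup_not_generate[OF c(2) _ dvd_refl] c(2) gen by simp
qed

lemma coprime_rotation_d: "coprime (snd d) (int c)"
proof (rule ccontr)
  assume not_coprime: "\<not> coprime (snd d) (int c)"
  obtain \<alpha> where a: "a = (True, \<alpha>)"
    using reflection_a by (cases a) auto
  obtain \<delta> where d: "d = (False, \<delta>)"
    using rotation_d by (cases d) auto
  define p where "p = gcd \<delta> (int c)"
  have "p \<noteq> 1" "p \<noteq> 0"
    using not_coprime d c(2) by (auto simp: p_def coprime_iff_gcd_eq_1)
  then have p: "1 < p"
    by (smt (verit) p_def gcd_ge_0_int)
  have "g = (False, 0) \<or> g = a" if "g \<in> Gs" for g
    using involution_cases[of g] odd_dihedral_reflections_commute[OF c(1), of g a] that g_commutes_a carrier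
      reflection_a by fastforce
  then have "insert a (insert d Gs) \<subseteq> {(False, 0), a, d}"
    by blast
  also have "\<dots> \<subseteq> dihedral_residue_subgroup c p \<alpha>"
    using a d carrier by (auto simp: dihedral_residue_subgroup_def p_def)
  finally have "insert a (insert d Gs) \<subseteq> dihedral_residue_subgroup c p \<alpha>" .
  then show False
    using dihedral_residue_subgroup_not_generate[OF c(2) p] gen by (simp add: p_def)
qed

end

lemma sum_plus_minus_one:
  assumes "p \<le> M"
  shows "(\<Sum>i = 1..M. if i \<le> p then 1 else - 1 :: int) = 2 * int p - int M"
  using assms
proof (induction M)
  case (Suc M)
  then show ?case
    by (cases "Suc M \<le> p") (simp_all add: sum.cl_ivl_Suc)
qed simp

text \<open>With \<open>p = (m + M/2) mod M\<close>, the conjugates \<open>g\<^sub>i\<^sub>,\<^sub>j d g\<^sub>i\<^sub>,\<^sub>j\<^sup>-\<^sup>1\<close> for \<open>1 \<le> i \<le> M\<close> are \<open>d\<close>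
  for \<open>i \<le> p\<close> and \<open>d\<^sup>-\<^sup>1\<close> otherwise, so \<open>X\<^sub>j\<close> is sent to \<open>s\<^sup>e d\<^sup>2\<^sup>p\<^sup>-\<^sup>M = s\<^sup>e d\<^sup>2\<^sup>m\<close> when
  \<open>h j = (e, m)\<close>.\<close>

definition solution_valuation :: "nat \<Rightarrow> (nat \<Rightarrow> bool \<times> int) \<Rightarrow> ggen \<Rightarrow> bool \<times> int" where
  "solution_valuation M h x = (case x of GA \<Rightarrow> (True, 0) | GD \<Rightarrow> (False, 1)
     | GG i j \<Rightarrow> if i = 0 then (fst (h j), 0)
         else if i \<le> nat ((snd (h j) + int M div 2) mod int M) then (False, 0) else (True, 0))"

lemma solution_valuation_Ggens: "solution_valuation M h ` Ggens n k \<subseteq> {(False, 0), (True, 0)}"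
proof -
  have "solution_valuation M h (GG i j) \<in> {(False, 0), (True, 0)}" for i j
    by (cases "fst (h j)") (simp_all add: solution_valuation_def)
  then show ?thesis
    unfolding Ggens_def by blast
qed

locale G4c_params =
  fixes n b c k :: nat and us :: "ulet list list"
  assumes n: "n = 2 ^ b * c" and c: "odd c" "1 < c" and b: "1 < b"
    and vars: "\<forall>u\<in>set us. \<forall>l\<in>set u. ulet_vars l \<subseteq> {1..k}"
begin

lemma n_half: "n = 2 * (n div 2)"
  and half_even: "even (n div 2)"
  and half_ge_2: "2 \<le> n div 2"
  and c_less_n: "c < n"
proof -
  obtain b' where b': "b = Suc (Suc b')"
    using b by (cases b; cases "b - 1") auto
  then have half: "n div 2 = 2 * (2 ^ b' * c)"
    using n by simp
  show twice: "n = 2 * (n div 2)"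
    using n b' by simp
  show "even (n div 2)"
    using half by simp
  have "c \<le> 2 ^ b' * c"
    by simp
  then show "2 \<le> n div 2" "c < n"
    using twice half c by linarith+
qed

lemma n_ge_2: "2 \<le> n"
  using half_ge_2 n_half by linarith

lemma two_dvd_n: "(2 :: int) dvd int n"
  using n_half by (metis dvd_triv_left of_nat_mult of_nat_numeral)

sublocale N: group "dihedral_model n"
  using n_ge_2 by (intro group_dihedral_model) simp

lemma generating_valuation_mod_c:
  assumes \<rho>: "\<rho> ` G4c_gens n k \<subseteq> carrier (dihedral_model n)"
    and rels: "G4c_base_relations (dihedral_model n) b c (\<rho> GA) (\<rho> GD) (\<rho> ` Ggens n k)"
    and gen: "generate (dihedral_model n) (\<rho> ` G4c_gens n k) = carrier (dihedral_model n)"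
  shows "fst (\<rho> GA) \<and> \<not> fst (\<rho> GD) \<and> coprime (snd (\<rho> GD)) (int c)"
proof -
  have "c dvd n"
    using n by simp
  then interpret R: group_hom "dihedral_model n" "dihedral_model c" "dihedral_reduce c"
    using c dihedral_reduce_hom[of c n] group_dihedral_model[of c] N.is_group
    by (simp add: group_hom_def group_hom_axioms_def)
  have "generate (dihedral_model c) (dihedral_reduce c ` \<rho> ` G4c_gens n k) = carrier (dihedral_model c)"
    using R.generate_img[OF \<rho>] gen dihedral_reduce_image[of c n] c_less_n c by simp
  then interpret Q: G4c_odd_dihedral_image b c "dihedral_reduce c (\<rho> GA)" "dihedral_reduce c (\<rho> GD)"
    "dihedral_reduce c ` \<rho> ` Ggens n k"
    using c b \<rho> rels Ggens_subset_G4c_gens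
    by unfold_locales (auto simp: R.G4c_base_relations_image G4c_gens_eq)
  show ?thesis
    using Q.reflection_a Q.rotation_d Q.coprime_rotation_d c by (simp add: dihedral_reduce_def)
qed

lemma Ggens_values_in_residue_subgroup:
  assumes \<rho>: "\<rho> ` G4c_gens n k \<subseteq> carrier (dihedral_model n)"
    and rels: "G4c_base_relations (dihedral_model n) b c (\<rho> GA) (\<rho> GD) (\<rho> ` Ggens n k)"
    and a: "\<rho> GA = (True, \<alpha>)"
  shows "\<rho> ` Ggens n k \<subseteq> dihedral_residue_subgroup n 2 \<alpha>"
proof
  fix y
  assume "y \<in> \<rho> ` Ggens n k"
  then obtain g where g: "g \<in> Ggens n k" and y: "y = \<rho> g"
    by blast
  have "\<rho> GA \<in> carrier (dihedral_model n)"
    using \<rho> by auto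
  then have "(True, \<alpha>) \<in> carrier (dihedral_model n)"
    using a by simp
  moreover have "\<rho> g \<in> carrier (dihedral_model n)"
    using \<rho> Ggens_subset_G4c_gens g by blast
  moreover have "\<rho> g \<otimes>\<^bsub>dihedral_model n\<^esub> \<rho> g = (False, 0)"
    "\<rho> g \<otimes>\<^bsub>dihedral_model n\<^esub> (True, \<alpha>) = (True, \<alpha>) \<otimes>\<^bsub>dihedral_model n\<^esub> \<rho> g"
    using rels g a by (auto simp: G4c_base_relations_def)
  ultimately show "y \<in> dihedral_residue_subgroup n 2 \<alpha>"
    using involution_commuting_with_reflection_in_residue_subgroup[OF n_half half_even] y by blast
qed

lemma generating_valuation_shape:
  assumes \<rho>: "\<rho> ` G4c_gens n k \<subseteq> carrier (dihedral_model n)"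
    and rels: "G4c_base_relations (dihedral_model n) b c (\<rho> GA) (\<rho> GD) (\<rho> ` Ggens n k)"
    and gen: "generate (dihedral_model n) (\<rho> ` G4c_gens n k) = carrier (dihedral_model n)"
  obtains \<alpha> \<delta> where "\<rho> GA = (True, \<alpha>)" "\<rho> GD = (False, \<delta>)" "coprime \<delta> (int n)"
    "\<rho> ` Ggens n k \<subseteq> dihedral_residue_subgroup n 2 \<alpha>"
proof -
  obtain \<alpha> \<delta> where a: "\<rho> GA = (True, \<alpha>)" and d: "\<rho> GD = (False, \<delta>)"
    and cop_c: "coprime \<delta> (int c)"
    using generating_valuation_mod_c[OF \<rho> rels gen] by (cases "\<rho> GA", cases "\<rho> GD") auto
  note G = Ggens_values_in_residue_subgroup[OF \<rho> rels a]
  have "odd \<delta>"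
  proof
    assume "even \<delta>"
    then have "\<rho> ` G4c_gens n k \<subseteq> dihedral_residue_subgroup n 2 \<alpha>"
      using G a d \<rho> by (auto simp: G4c_gens_eq dihedral_residue_subgroup_def even_iff_mod_2_eq_zero)
    then show False
      using dihedral_residue_subgroup_not_generate[of n 2] n_ge_2 two_dvd_n gen by simp
  qed
  then have "coprime \<delta> (int n)"
    using cop_c n by simp
  then show ?thesis
    by (rule that[OF a d _ G])
qed

lemma Xword_in_residue_subgroup:
  assumes \<rho>: "\<rho> ` G4c_gens n k \<subseteq> carrier (dihedral_model n)"
    and d: "\<rho> GD = (False, \<delta>)" and G: "\<rho> ` Ggens n k \<subseteq> dihedral_residue_subgroup n 2 \<alpha>"
    and j: "j \<in> {1..k}"
  shows "eval_word (dihedral_model n) \<rho> (Xword n j) \<in> dihedral_residue_subgroup n 2 \<alpha>"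
proof -
  interpret T: subgroup "dihedral_residue_subgroup n 2 \<alpha>" "dihedral_model n"
    using n_ge_2 two_dvd_n by (intro subgroup_dihedral_residue_subgroup) simp_all
  define \<sigma> where "\<sigma> i = (if fst (\<rho> (GG i j)) then - 1 else 1 :: int)" for i
  have gens: "GG i j \<in> Ggens n k" if "i \<le> n div 2" for i
    using j that by (simp add: Ggens_def)
  have "\<rho> GD \<in> carrier (dihedral_model n)"
    using \<rho> by auto
  then have d_carrier: "(False, \<delta>) \<in> carrier (dihedral_model n)"
    using d by simp
  have carrier: "\<rho> (GG i j) \<in> carrier (dihedral_model n)" if "i \<le> n div 2" for i
    using \<rho> gens[OF that] Ggens_subset_G4c_gens by blast
  have "eval_word (dihedral_model n) \<rho> (Xword n j) =
      \<rho> (GG 0 j) \<otimes>\<^bsub>dihedral_model n\<^esub> \<rho> GD [^]\<^bsub>dihedral_model n\<^esub> (\<Sum>i = 1..n div 2. \<sigma> i)"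
    using carrier d d_carrier n_ge_2
    by (intro N.eval_word_Xword[OF \<rho> j]) (simp add: \<sigma>_def dihedral_model_conj_rotation)
  moreover have "{i \<in> {1..n div 2}. odd (\<sigma> i)} = {1..n div 2}"
    by (auto simp: \<sigma>_def)
  then have "even (\<Sum>i = 1..n div 2. \<sigma> i)"
    using half_even even_sum_iff[OF finite_atLeastAtMost, of \<sigma> 1 "n div 2"] by simp
  then have "\<rho> GD [^]\<^bsub>dihedral_model n\<^esub> (\<Sum>i = 1..n div 2. \<sigma> i) \<in> dihedral_residue_subgroup n 2 \<alpha>"
    using d d_carrier n_ge_2 two_dvd_n
    by (simp add: dihedral_model_rotation_int_pow dihedral_residue_subgroup_def mod_mod_cancel)
  moreover have "\<rho> (GG 0 j) \<in> dihedral_residue_subgroup n 2 \<alpha>"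
    using G gens[OF zero_le] by blast
  ultimately show ?thesis
    by simp
qed

lemma has_solution_if_generating_valuation:
  assumes \<rho>: "\<rho> ` G4c_gens n k \<subseteq> carrier (dihedral_model n)"
    and rels: "\<forall>r\<in>G4c_rels n b c k us. r \<in> words (G4c_gens n k) \<longrightarrow>
      eval_word (dihedral_model n) \<rho> r = \<one>\<^bsub>dihedral_model n\<^esub>"
    and gen: "generate (dihedral_model n) (\<rho> ` G4c_gens n k) = carrier (dihedral_model n)"
  shows "has_solution_Dn n k us"
proof -
  have base: "G4c_base_relations (dihedral_model n) b c (\<rho> GA) (\<rho> GD) (\<rho> ` Ggens n k)"
    and eqs: "\<forall>u\<in>set us. eval_word (dihedral_model n) \<rho> (subst_eq n u) = \<one>\<^bsub>dihedral_model n\<^esub>"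
    using rels N.G4c_rels_eval_iff[OF \<rho> vars] by simp_all
  obtain \<alpha> \<delta> where a: "\<rho> GA = (True, \<alpha>)" and d: "\<rho> GD = (False, \<delta>)" and cop: "coprime \<delta> (int n)"
    and G: "\<rho> ` Ggens n k \<subseteq> dihedral_residue_subgroup n 2 \<alpha>"
    using generating_valuation_shape[OF \<rho> base gen] by blast
  let ?\<iota> = "dihedral_embed n \<alpha> \<delta>"
  interpret \<iota>: group_hom "dihedral_model (n div 2)" "dihedral_model n" ?\<iota>
    using half_ge_2 n_half dihedral_embed_hom[of n "n div 2" \<alpha> \<delta>] group_dihedral_model[of "n div 2"] N.is_group
    by (simp add: group_hom_def group_hom_axioms_def)
  have "\<exists>p\<in>carrier (dihedral_model (n div 2)). ?\<iota> p = eval_word (dihedral_model n) \<rho> (Xword n j)"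
    if j: "j \<in> {1..k}" for j
    using Xword_in_residue_subgroup[OF \<rho> d G j] half_ge_2 n_half cop
    by (cases "eval_word (dihedral_model n) \<rho> (Xword n j)")
      (simp add: dihedral_embed_onto_residue_subgroup)
  then obtain h where h: "\<forall>j\<in>{1..k}. h j \<in> carrier (dihedral_model (n div 2)) \<and>
      ?\<iota> (h j) = eval_word (dihedral_model n) \<rho> (Xword n j)"
    by metis
  have "\<rho> GA \<in> carrier (dihedral_model n)" "\<rho> GD \<in> carrier (dihedral_model n)"
    using \<rho> by auto
  then have s: "?\<iota> (True, 0) = \<rho> GA" and t: "?\<iota> (False, 1) = \<rho> GD \<otimes>\<^bsub>dihedral_model n\<^esub> \<rho> GD"
    using a d by (simp_all add: dihedral_embed_def)
  have "eval_eq (dihedral_model (n div 2)) (True, 0) (False, 1) h u = (False, 0)" if u: "u \<in> set us" for u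
  proof (rule dihedral_embed_eq_one[OF n_half cop])
    show "eval_eq (dihedral_model (n div 2)) (True, 0) (False, 1) h u \<in> carrier (dihedral_model (n div 2))"
      using u vars h half_ge_2 by (intro \<iota>.G.eval_eq_closed) fastforce+
    have "eval_word (dihedral_model n) \<rho> (subst_eq n u) =
        ?\<iota> (eval_eq (dihedral_model (n div 2)) (True, 0) (False, 1) h u)"
      using u vars h half_ge_2 by (intro \<iota>.eval_word_subst_eq[OF \<rho> _ _ s t]) auto
    then show "?\<iota> (eval_eq (dihedral_model (n div 2)) (True, 0) (False, 1) h u) = (False, 0)"
      using eqs u by simp
  qed
  then have "is_solution (dihedral_model (n div 2)) (True, 0) (False, 1) k us h"
    using h by (simp add: is_solution_def)
  then show ?thesis
    unfolding has_solution_Dn_iff_model[OF half_ge_2 vars] by blast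
qed

lemma solution_valuation_carrier: "solution_valuation M h x \<in> carrier (dihedral_model n)"
  using n_ge_2 by (auto simp: solution_valuation_def split: ggen.split)

lemma solution_valuation_Xword:
  assumes hj: "h j \<in> carrier (dihedral_model (n div 2))" and j: "j \<in> {1..k}"
  shows "eval_word (dihedral_model n) (solution_valuation (n div 2) h) (Xword n j) = dihedral_embed n 0 1 (h j)"
proof -
  let ?\<rho> = "solution_valuation (n div 2) h" and ?M = "int (n div 2)"
  obtain e m where em: "h j = (e, m)"
    by force
  define p where "p = nat ((m + ?M div 2) mod ?M)"
  have M: "?M > 0" "int n = 2 * ?M" "even ?M"
    using half_ge_2 n_half half_even by simp_all
  have "(m + ?M div 2) mod ?M < ?M"
    using M(1) by (rule pos_mod_bound)
  then have p_le: "p \<le> n div 2"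
    by (simp add: p_def nat_le_iff)
  have \<rho>: "?\<rho> ` G4c_gens n k \<subseteq> carrier (dihedral_model n)"
    using solution_valuation_carrier by blast
  have "?\<rho> (GG i j) \<otimes>\<^bsub>dihedral_model n\<^esub> ?\<rho> GD \<otimes>\<^bsub>dihedral_model n\<^esub> inv\<^bsub>dihedral_model n\<^esub> ?\<rho> (GG i j) =
      ?\<rho> GD [^]\<^bsub>dihedral_model n\<^esub> (if i \<le> p then 1 else - 1 :: int)" if "i \<in> {1..n div 2}" for i
    using that n_ge_2 dihedral_model_conj_rotation[of n "?\<rho> (GG i j)" 1] solution_valuation_carrier
    by (simp add: solution_valuation_def em p_def)
  then have "eval_word (dihedral_model n) ?\<rho> (Xword n j) =
      (e, 0) \<otimes>\<^bsub>dihedral_model n\<^esub> (False, 1) [^]\<^bsub>dihedral_model n\<^esub> (2 * int p - int (n div 2))"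
    using N.eval_word_Xword[OF \<rho> j] sum_plus_minus_one[OF p_le] by (simp add: solution_valuation_def em)
  also have "\<dots> = (e, (2 * int p - ?M) mod int n)"
    using n_ge_2 by (simp add: dihedral_model_rotation_int_pow)
  also have "(2 * int p - ?M) mod int n = (2 * m) mod int n"
  proof -
    have "int p = (m + ?M div 2) mod ?M"
      using M(1) by (simp add: p_def)
    then have "2 * int p = (2 * (m + ?M div 2)) mod (2 * ?M)"
      by (simp only: mod_mult_mult1)
    also have "2 * (m + ?M div 2) = 2 * m + ?M"
      using M(3) by simp
    finally show ?thesis
      using M(2) by (simp add: mod_simps)
  qed
  finally show ?thesis
    by (simp add: em dihedral_embed_def)
qed

lemma G4c_base_relations_reflection_rotation:
  assumes Gs: "Gs \<subseteq> {(False, 0), (True, 0)}"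
  shows "G4c_base_relations (dihedral_model n) b c (True, 0) (False, 1) Gs"
proof -
  have one: "1 mod int n = 1"
    using n_ge_2 by simp
  have dc: "(False, 1) [^]\<^bsub>dihedral_model n\<^esub> c = (False, int c)"
    using n_ge_2 c_less_n by (simp add: dihedral_model_rotation_pow)
  obtain b' where b': "b = Suc b'"
    using b by (cases b) auto
  have "iter_commutator (dihedral_model n) (False, int c) (True, 0) b = (False, (2 ^ b * int c) mod int n)"
    using n_ge_2 c_less_n by (intro dihedral_model_iter_commutator_rotation) auto
  also have "(2 ^ b * int c) mod int n = 0"
    using n by simp
  finally have "iter_commutator (dihedral_model n) (False, int c) (True, 0) b = (False, 0)" .
  then have iter: "iter_commutator (dihedral_model n) (False, int c) g b = (False, 0)"
    if "g = (False, 0) \<or> g = (True, 0)" for g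
    using that N.iter_commutator_one[of "(False, int c)" b'] c_less_n b' by auto
  have Gs_cases: "g = (False, 0) \<or> g = (True, 0)" if "g \<in> Gs" for g
    using that Gs by blast
  show ?thesis
    unfolding G4c_base_relations_def using one dc iter
    by (auto simp: mod_simps dest!: Gs_cases)
qed

lemma solution_valuation_subst_eq:
  assumes h: "is_solution (dihedral_model (n div 2)) (True, 0) (False, 1) k us h" and u: "u \<in> set us"
  shows "eval_word (dihedral_model n) (solution_valuation (n div 2) h) (subst_eq n u) = \<one>\<^bsub>dihedral_model n\<^esub>"
proof -
  let ?\<iota> = "dihedral_embed n 0 1"
  interpret \<iota>: group_hom "dihedral_model (n div 2)" "dihedral_model n" ?\<iota>
    using half_ge_2 n_half dihedral_embed_hom[of n "n div 2" 0 1] group_dihedral_model[of "n div 2"] N.is_group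
    by (simp add: group_hom_def group_hom_axioms_def)
  have \<rho>: "solution_valuation (n div 2) h ` G4c_gens n k \<subseteq> carrier (dihedral_model n)"
    using solution_valuation_carrier by blast
  have hc: "\<forall>j\<in>{1..k}. h j \<in> carrier (dihedral_model (n div 2))"
    using h by (simp add: is_solution_def)
  have "eval_word (dihedral_model n) (solution_valuation (n div 2) h) (subst_eq n u) =
      ?\<iota> (eval_eq (dihedral_model (n div 2)) (True, 0) (False, 1) h u)"
    using u vars hc half_ge_2 n_ge_2 solution_valuation_Xword
    by (intro \<iota>.eval_word_subst_eq[OF \<rho>]) (auto simp: dihedral_embed_def solution_valuation_def)
  then show ?thesis
    using h u by (simp add: dihedral_embed_def is_solution_def)
qed

lemma generating_valuation_if_has_solution:
  assumes "has_solution_Dn n k us"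
  shows "\<exists>\<rho>. \<rho> ` G4c_gens n k \<subseteq> carrier (dihedral_model n) \<and>
    (\<forall>r\<in>G4c_rels n b c k us. r \<in> words (G4c_gens n k) \<longrightarrow>
      eval_word (dihedral_model n) \<rho> r = \<one>\<^bsub>dihedral_model n\<^esub>) \<and>
    generate (dihedral_model n) (\<rho> ` G4c_gens n k) = carrier (dihedral_model n)"
proof -
  obtain h where h: "is_solution (dihedral_model (n div 2)) (True, 0) (False, 1) k us h"
    using assms unfolding has_solution_Dn_iff_model[OF half_ge_2 vars] by blast
  let ?\<rho> = "solution_valuation (n div 2) h"
  have \<rho>: "?\<rho> ` G4c_gens n k \<subseteq> carrier (dihedral_model n)"
    using solution_valuation_carrier by blast
  have "G4c_base_relations (dihedral_model n) b c (?\<rho> GA) (?\<rho> GD) (?\<rho> ` Ggens n k)"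
    using G4c_base_relations_reflection_rotation[OF solution_valuation_Ggens]
    by (simp add: solution_valuation_def)
  moreover have "?\<rho> GD [^]\<^bsub>dihedral_model n\<^esub> n = \<one>\<^bsub>dihedral_model n\<^esub>"
    using n_ge_2 by (simp add: solution_valuation_def dihedral_model_rotation_pow)
  ultimately have rels: "\<forall>r\<in>G4c_rels n b c k us. r \<in> words (G4c_gens n k) \<longrightarrow>
      eval_word (dihedral_model n) ?\<rho> r = \<one>\<^bsub>dihedral_model n\<^esub>"
    unfolding N.G4c_rels_eval_iff[OF \<rho> vars] using solution_valuation_subst_eq[OF h] by blast
  have "(True, 0) \<in> ?\<rho> ` G4c_gens n k"
    by (rule rev_image_eqI[OF GA_in_G4c_gens]) (simp add: solution_valuation_def)
  moreover have "(False, 1) \<in> ?\<rho> ` G4c_gens n k"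
    by (rule rev_image_eqI[OF GD_in_G4c_gens]) (simp add: solution_valuation_def)
  ultimately have "generate (dihedral_model n) (?\<rho> ` G4c_gens n k) = carrier (dihedral_model n)"
    using n_ge_2 \<rho> by (intro dihedral_model_generate) auto
  with \<rho> rels show ?thesis
    by blast
qed

end

theorem lemma7p18:
  fixes n b c k :: nat and us :: "ulet list list"
  assumes "n = 2 ^ b * c" and "odd c" and "c > 1" and "b > 1"
    and "\<forall>u\<in>set us. \<forall>l\<in>set u. ulet_vars l \<subseteq> {1..k}"
  shows "(\<exists>f. f \<in> hom (G4c n b c k us) (dihedral_pres n) \<and>
              f ` carrier (G4c n b c k us) = carrier (dihedral_pres n))
         \<longleftrightarrow> has_solution_Dn n k us"
proof -
  interpret G4c_params n b c k us
    using assms by unfold_locales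
  have "(\<exists>f. f \<in> hom (G4c n b c k us) (dihedral_pres n) \<and>
            f ` carrier (G4c n b c k us) = carrier (dihedral_pres n)) \<longleftrightarrow>
        (\<exists>f. f \<in> hom (G4c n b c k us) (dihedral_model n) \<and>
            f ` carrier (G4c n b c k us) = carrier (dihedral_model n))"
    by (rule ex_surj_hom_dihedral_pres_iff[OF n_ge_2])
  also have "\<dots> \<longleftrightarrow> (\<exists>\<rho>. \<rho> ` G4c_gens n k \<subseteq> carrier (dihedral_model n) \<and>
      (\<forall>r\<in>G4c_rels n b c k us. r \<in> words (G4c_gens n k) \<longrightarrow>
        eval_word (dihedral_model n) \<rho> r = \<one>\<^bsub>dihedral_model n\<^esub>) \<and>
      generate (dihedral_model n) (\<rho> ` G4c_gens n k) = carrier (dihedral_model n))"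
    unfolding G4c_def by (rule N.surj_hom_presented_group_iff)
  also have "\<dots> \<longleftrightarrow> has_solution_Dn n k us"
    using has_solution_if_generating_valuation generating_valuation_if_has_solution by (intro iffI) (elim exE conjE, blast+)
  finally show ?thesis .
qed

end
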